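(* Let $\alpha\in(0,1)\cup(1,\infty)$, let $\rho_{AB}$ be a state on a finite-dimensional $\mathcal{H}_A\otimes\mathcal{H}_B$, and let $U_A$, $V_B$ be unitaries on $\mathcal{H}_A$ and $\mathcal{H}_B$. Then $D^\alpha(\overline{A};B)_{(U_A\otimes V_B)\rho_{AB}(U_A\otimes V_B)^\dagger}=D^\alpha(\overline{A};B)_\rho$.
   Context: All Hilbert spaces are finite-dimensional, $\log$ is natural. For a positive semi-definite $M$ and function $f$, $f(M)$ applies $f$ only to nonzero eigenvalues (negative powers are generalized inverses). For a state $\rho_{ABE}$ and $\alpha\in(0,1)\cup(1,\infty)$, $$I_\alpha(A;B|E)_\rho=\frac{\alpha}{\alpha-1}\log\mathrm{Tr}\Big\{\Big(\rho_E^{(\alpha-1)/2}\,\mathrm{Tr}_A\big\{\rho_{AE}^{(1-\alpha)/2}\rho_{ABE}^{\alpha}\rho_{AE}^{(1-\alpha)/2}\big\}\,\rho_E^{(\alpha-1)/2}\Big)^{1/\alpha}\Big\}.$$ The Rényi quantum discord of $\rho_{AB}$ is $D^\alpha(\overline{A};B)_\rho=\inf_{\{\Lambda_x\}}I_\alpha(E;B|X)_\omega$, the infimum over POVMs $\{\Lambda_x\}$ on $\mathcal{H}_A$, where $\omega_{EXB}=U_{A\to EX}\rho_{AB}U_{A\to EX}^\dagger$ and $U_{A\to EX}$ is an isometric extension of the measurement channel $\sigma\mapsto\sum_x\mathrm{Tr}\{\Lambda_x\sigma\}|x\rangle\langle x|_X$ (the same formula is used for every $\alpha\neq1$). *)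

theory Defs
  imports "Jordan_Normal_Form.Schur_Decomposition" "HOL-Library.Extended_Real"
begin

text \<open>A composite system C^m (x) C^n is
C^(m*n) with the index of basis vector |i>|j> being i*n+j (Kronecker convention).\<close>

definition mtrace :: "complex mat \<Rightarrow> complex" where
  "mtrace M = (\<Sum>i<dim_row M. M $$ (i, i))"

definition kron :: "complex mat \<Rightarrow> complex mat \<Rightarrow> complex mat" where
  "kron A B = mat (dim_row A * dim_row B) (dim_col A * dim_col B)
     (\<lambda>(i, j). A $$ (i div dim_row B, j div dim_col B) * B $$ (i mod dim_row B, j mod dim_col B))"

text \<open>Swap operator C^m (x) C^n -> C^n (x) C^m, |i>|j> |-> |j>|i>.\<close>
definition swap_mat :: "nat \<Rightarrow> nat \<Rightarrow> complex mat" where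
  "swap_mat m n = mat (m * n) (m * n)
     (\<lambda>(r, c). if r = (c mod n) * m + c div n then 1 else 0)"

definition ptrace_left :: "nat \<Rightarrow> nat \<Rightarrow> complex mat \<Rightarrow> complex mat" where
  "ptrace_left m n M = mat n n (\<lambda>(i, j). \<Sum>a<m. M $$ (a * n + i, a * n + j))"

definition ptrace_mid :: "nat \<Rightarrow> nat \<Rightarrow> nat \<Rightarrow> complex mat \<Rightarrow> complex mat" where
  "ptrace_mid a b e M = mat (a * e) (a * e)
     (\<lambda>(i, j). \<Sum>k<b. M $$ (((i div e) * b + k) * e + i mod e, ((j div e) * b + k) * e + j mod e))"

text \<open>X_{AE} (x) 1_B, as an operator on C^a (x) C^b (x) C^e.\<close>
definition embed_mid :: "nat \<Rightarrow> nat \<Rightarrow> nat \<Rightarrow> complex mat \<Rightarrow> complex mat" where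
  "embed_mid a b e X = mat (a * b * e) (a * b * e)
     (\<lambda>(i, j). if (i div e) mod b = (j div e) mod b
               then X $$ ((i div e) div b * e + i mod e, (j div e) div b * e + j mod e) else 0)"

definition hermitian :: "complex mat \<Rightarrow> bool" where
  "hermitian M \<longleftrightarrow> square_mat M \<and> mat_adjoint M = M"

definition psd :: "complex mat \<Rightarrow> bool" where
  "psd M \<longleftrightarrow> hermitian M \<and>
     (\<forall>v \<in> carrier_vec (dim_row M). 0 \<le> Re (conjugate v \<bullet> (M *\<^sub>v v)))"

definition unitary :: "nat \<Rightarrow> complex mat \<Rightarrow> bool" where
  "unitary n U \<longleftrightarrow> U \<in> carrier_mat n n \<and> mat_adjoint U * U = 1\<^sub>m n \<and> U * mat_adjoint U = 1\<^sub>m n"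

definition density :: "nat \<Rightarrow> complex mat \<Rightarrow> bool" where
  "density n \<rho> \<longleftrightarrow> \<rho> \<in> carrier_mat n n \<and> psd \<rho> \<and> mtrace \<rho> = 1"

definition diag_of :: "nat \<Rightarrow> (nat \<Rightarrow> real) \<Rightarrow> complex mat" where
  "diag_of n d = mat n n (\<lambda>(i, j). if i = j then complex_of_real (d i) else 0)"

text \<open>Functional calculus f(M) for Hermitian M, where f is applied only to
the nonzero eigenvalues (zero eigenvalues are mapped to 0). Defined through a
spectral decomposition M = W diag(d) W^dagger; the result does not depend on the
chosen decomposition.\<close>
definition mfun :: "(real \<Rightarrow> real) \<Rightarrow> complex mat \<Rightarrow> complex mat" where
  "mfun f M = (SOME N. \<exists>W d. unitary (dim_row M) W \<and>
       M = W * diag_of (dim_row M) d * mat_adjoint W \<and>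
       N = W * diag_of (dim_row M) (\<lambda>i. if d i = 0 then 0 else f (d i)) * mat_adjoint W)"

definition mpow :: "complex mat \<Rightarrow> real \<Rightarrow> complex mat" where
  "mpow M p = mfun (\<lambda>t. t powr p) M"

text \<open>Renyi conditional mutual information I_alpha(A;B|E)_rho for rho on
C^a (x) C^b (x) C^e (ordering A, B, E).\<close>
definition renyi_cmi :: "real \<Rightarrow> nat \<Rightarrow> nat \<Rightarrow> nat \<Rightarrow> complex mat \<Rightarrow> real" where
  "renyi_cmi \<alpha> a b e \<rho> =
    (let \<rho>AE = ptrace_mid a b e \<rho>;
         \<rho>E = ptrace_left (a * b) e \<rho>;
         S = embed_mid a b e (mpow \<rho>AE ((1 - \<alpha>) / 2));
         inner = ptrace_left a (b * e) (S * mpow \<rho> \<alpha> * S);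
         T = kron (1\<^sub>m b) (mpow \<rho>E ((\<alpha> - 1) / 2));
         outer = T * inner * T
     in \<alpha> / (\<alpha> - 1) * ln (Re (mtrace (mpow outer (1 / \<alpha>)))))"

definition povm :: "nat \<Rightarrow> nat \<Rightarrow> (nat \<Rightarrow> complex mat) \<Rightarrow> bool" where
  "povm d n \<Lambda> \<longleftrightarrow> (\<forall>x<n. \<Lambda> x \<in> carrier_mat d d \<and> psd (\<Lambda> x)) \<and>
     mat d d (\<lambda>(i, j). \<Sum>x<n. \<Lambda> x $$ (i, j)) = 1\<^sub>m d"

definition meas_channel :: "nat \<Rightarrow> (nat \<Rightarrow> complex mat) \<Rightarrow> complex mat \<Rightarrow> complex mat" where
  "meas_channel n \<Lambda> \<sigma> = mat n n (\<lambda>(i, j). if i = j then mtrace (\<Lambda> i * \<sigma>) else 0)"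

text \<open>V : C^d -> C^dE (x) C^n (ordering E, X) is an isometric extension of the
measurement channel.\<close>
definition iso_ext :: "nat \<Rightarrow> nat \<Rightarrow> (nat \<Rightarrow> complex mat) \<Rightarrow> nat \<Rightarrow> complex mat \<Rightarrow> bool" where
  "iso_ext d n \<Lambda> dE V \<longleftrightarrow> V \<in> carrier_mat (dE * n) d \<and> mat_adjoint V * V = 1\<^sub>m d \<and>
     (\<forall>\<sigma> \<in> carrier_mat d d. ptrace_left dE n (V * \<sigma> * mat_adjoint V) = meas_channel n \<Lambda> \<sigma>)"

text \<open>For rho_AB on C^dA (x) C^dB and isometry V_{A->EX}: the state omega
reordered as E (x) B (x) X, and I_alpha(E;B|X)_omega.\<close>
definition discord_obj :: "real \<Rightarrow> nat \<Rightarrow> nat \<Rightarrow> complex mat \<Rightarrow> nat \<Rightarrow> nat \<Rightarrow> complex mat \<Rightarrow> real" where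
  "discord_obj \<alpha> dA dB \<rho> n dE V =
    (let \<omega>EXB = kron V (1\<^sub>m dB) * \<rho> * mat_adjoint (kron V (1\<^sub>m dB));
         P = kron (1\<^sub>m dE) (swap_mat n dB);
         \<omega>EBX = P * \<omega>EXB * mat_adjoint P
     in renyi_cmi \<alpha> dE dB n \<omega>EBX)"

definition renyi_discord :: "real \<Rightarrow> nat \<Rightarrow> nat \<Rightarrow> complex mat \<Rightarrow> ereal" where
  "renyi_discord \<alpha> dA dB \<rho> =
    (INF q \<in> {(n, \<Lambda>, dE, V). povm dA n \<Lambda> \<and> iso_ext dA n \<Lambda> dE V}.
        ereal (case q of (n, \<Lambda>, dE, V) \<Rightarrow> discord_obj \<alpha> dA dB \<rho> n dE V))"

end

theory Submission
  imports Defs "Jordan_Normal_Form.Spectral_Radius"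
begin

text \<open>Measuring system \<open>A\<close> of \<open>(U \<otimes> V) \<rho> (U \<otimes> V)\<^sup>\<dagger>\<close> with a POVM \<open>{\<Lambda>\<^sub>x}\<close> and an
isometric extension \<open>W\<close> yields the same state as measuring \<open>\<rho>\<close> with the POVM
\<open>{U\<^sup>\<dagger> \<Lambda>\<^sub>x U}\<close> and the extension \<open>W U\<close>, followed by the unitary \<open>V\<close> on \<open>B\<close>; with
\<open>U\<^sup>\<dagger>\<close> in place of \<open>U\<close> every measurement of \<open>\<rho>\<close> arises this way. So both infima
range over the same values once \<open>I\<^sub>\<alpha>(E;B|X)\<close> is known to be invariant under a unitary
\<open>1 \<otimes> V \<otimes> 1\<close> on the middle system. That holds because the marginals on \<open>EX\<close> and \<open>X\<close>
are unchanged, the operator built from the \<open>EX\<close>-marginal acts trivially on \<open>B\<close> and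
hence commutes with \<open>1 \<otimes> V \<otimes> 1\<close>, after tracing out \<open>E\<close> the remaining conjugation by
\<open>V \<otimes> 1\<close> commutes with the operator built from the \<open>X\<close>-marginal, and the trace of a
matrix function is unitarily invariant. The last point needs the functional calculus,
defined through an arbitrary spectral decomposition, to be well defined and unitarily
covariant; this rests on the spectral theorem for Hermitian matrices, proved by
eigenvector deflation.\<close>

lemma index_mult_mat_sum:
  assumes "i < dim_row A" "j < dim_col B" "dim_col A = dim_row B"
  shows "(A * B) $$ (i,j) = (\<Sum>l<dim_col A. A $$ (i,l) * B $$ (l,j))"
  using assms by (auto simp: scalar_prod_def atLeast0LessThan intro!: sum.cong)

declare index_mult_mat(1)[simp del] index_mult_mat_sum[simp]

lemma mat_adjoint_eq: "mat_adjoint (A::complex mat) = mat (dim_col A) (dim_row A) (\<lambda>(i,j). cnj (A $$ (j,i)))"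
  by (rule eq_matI) (auto simp: mat_adjoint_def mat_of_rows_def)

lemma dim_mat_adjoint[simp]:
  "dim_row (mat_adjoint (A::complex mat)) = dim_col A" "dim_col (mat_adjoint (A::complex mat)) = dim_row A"
  by (auto simp: mat_adjoint_eq)

lemma index_mat_adjoint[simp]:
  "i < dim_col A \<Longrightarrow> j < dim_row A \<Longrightarrow> mat_adjoint (A::complex mat) $$ (i,j) = cnj (A $$ (j,i))"
  by (simp add: mat_adjoint_eq)

lemma mat_adjoint_carrier[simp]: "(A::complex mat) \<in> carrier_mat n m \<Longrightarrow> mat_adjoint A \<in> carrier_mat m n"
  by auto

lemma mat_adjoint_mat_adjoint[simp]: "mat_adjoint (mat_adjoint A) = (A::complex mat)"
  by (rule eq_matI) auto

lemma mat_adjoint_one[simp]: "mat_adjoint (1\<^sub>m n) = (1\<^sub>m n :: complex mat)"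
  by (rule eq_matI) auto

lemma mat_adjoint_mult:
  fixes A B :: "complex mat"
  assumes "dim_col A = dim_row B"
  shows "mat_adjoint (A * B) = mat_adjoint B * mat_adjoint A"
proof (rule eq_matI)
  fix i j assume "i < dim_row (mat_adjoint B * mat_adjoint A)" "j < dim_col (mat_adjoint B * mat_adjoint A)"
  then have i: "i < dim_col B" and j: "j < dim_row A" by auto
  have "mat_adjoint (A * B) $$ (i,j) = (\<Sum>l<dim_col A. cnj (A $$ (j,l)) * cnj (B $$ (l,i)))"
    using i j assms by (simp add: cnj_sum)
  also have "\<dots> = (mat_adjoint B * mat_adjoint A) $$ (i,j)"
    using i j assms by (auto intro!: sum.cong simp: mult.commute)
  finally show "mat_adjoint (A * B) $$ (i,j) = (mat_adjoint B * mat_adjoint A) $$ (i,j)" .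
qed auto

lemma assoc_mult_mat_dims:
  assumes "dim_col (A::complex mat) = dim_row B" "dim_col B = dim_row C"
  shows "A * B * C = A * (B * C)"
proof -
  have "A \<in> carrier_mat (dim_row A) (dim_row B)" "B \<in> carrier_mat (dim_row B) (dim_row C)"
    using assms by (auto intro: carrier_matI)
  then show ?thesis using assoc_mult_mat carrier_mat_triv by blast
qed

lemma conj_mult_conj:
  fixes A B M :: "complex mat"
  assumes "A \<in> carrier_mat p q" "B \<in> carrier_mat q r" "M \<in> carrier_mat r r"
  shows "A * (B * M * mat_adjoint B) * mat_adjoint A = (A * B) * M * mat_adjoint (A * B)"
  using assms by (simp add: assoc_mult_mat_dims mat_adjoint_mult)

lemma self_adjoint_conj:
  fixes M W :: "complex mat"
  assumes "M \<in> carrier_mat n n" "mat_adjoint M = M" "W \<in> carrier_mat m n"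
  shows "mat_adjoint (W * M * mat_adjoint W) = W * M * mat_adjoint W"
  using assms by (simp add: mat_adjoint_mult assoc_mult_mat_dims)

lemma hermitian_entry:
  assumes "hermitian M" "i < dim_row M" "j < dim_row M"
  shows "M $$ (i,j) = cnj (M $$ (j,i))"
proof -
  have "dim_col M = dim_row M" using assms(1) by (auto simp: hermitian_def square_mat.simps)
  then have "mat_adjoint M $$ (i,j) = cnj (M $$ (j,i))" using assms by simp
  then show ?thesis using assms(1) by (simp add: hermitian_def)
qed

lemma index_triple_mult:
  fixes A B C :: "complex mat"
  assumes "A \<in> carrier_mat p q" "B \<in> carrier_mat q r" "C \<in> carrier_mat r s" "i < p" "j < s"
  shows "(A * B * C) $$ (i,j) = (\<Sum>k<q. \<Sum>l<r. A $$ (i,k) * B $$ (k,l) * C $$ (l,j))"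
proof -
  have "(A * B * C) $$ (i,j) = (\<Sum>l<r. (A * B) $$ (i,l) * C $$ (l,j))"
    using assms by (subst index_mult_mat_sum) (auto simp del: index_mult_mat_sum)
  also have "\<dots> = (\<Sum>l<r. (\<Sum>k<q. A $$ (i,k) * B $$ (k,l)) * C $$ (l,j))"
    using assms by (intro sum.cong refl) auto
  also have "\<dots> = (\<Sum>l<r. \<Sum>k<q. A $$ (i,k) * B $$ (k,l) * C $$ (l,j))"
    by (simp add: sum_distrib_right)
  finally show ?thesis by (simp add: sum.swap[of _ "{..<r}"])
qed

lemma sum_lessThan_mult: "(\<Sum>l<(a::nat)*b. g l) = (\<Sum>i<a. \<Sum>j<b. g (i*b+j))"
proof (induction a)
  case (Suc a)
  have split: "{..<Suc a * b} = {..<a*b} \<union> {a*b..<a*b+b}" by auto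
  have "(\<Sum>l<Suc a*b. g l) = (\<Sum>l<a*b. g l) + (\<Sum>l\<in>{a*b..<a*b+b}. g l)"
    unfolding split by (subst sum.union_disjoint) auto
  also have "(\<Sum>l\<in>{a*b..<a*b+b}. g l) = (\<Sum>j<b. g (a*b+j))"
    using sum.shift_bounds_nat_ivl[of g 0 "a*b" b] by (simp add: atLeast0LessThan add.commute)
  finally show ?case using Suc by simp
qed simp

lemma block_index_less: "i < (a::nat) \<Longrightarrow> j < b \<Longrightarrow> i*b+j < a*b"
proof -
  assume "i < a" "j < b"
  then have "i*b+j < Suc i * b" by simp
  also have "\<dots> \<le> a * b" using \<open>i < a\<close> by (intro mult_right_mono) auto
  finally show ?thesis .
qed

lemma block_index_cases: "I < a*(e::nat) \<Longrightarrow> I = (I div e)*e + I mod e \<and> I div e < a \<and> I mod e < e"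
  by (cases "e = 0") (auto simp: less_mult_imp_div_less)

lemma sum_eq_single:
  assumes "finite A" "x \<in> A" "\<And>y. y \<in> A \<Longrightarrow> y \<noteq> x \<Longrightarrow> g y = 0"
  shows "sum g A = g x"
  using assms by (simp add: sum.remove sum.neutral)

lemma mtrace_mult_commute:
  assumes "A \<in> carrier_mat a b" "B \<in> carrier_mat b a"
  shows "mtrace (A * B) = mtrace (B * A)"
proof -
  have "mtrace (A*B) = (\<Sum>i<a. \<Sum>l<b. A $$ (i,l) * B $$ (l,i))"
    using assms by (auto simp: mtrace_def)
  also have "\<dots> = (\<Sum>l<b. \<Sum>i<a. B $$ (l,i) * A $$ (i,l))"
    by (subst sum.swap) (simp add: mult.commute)
  also have "\<dots> = mtrace (B*A)"
    using assms by (auto simp: mtrace_def)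
  finally show ?thesis .
qed

lemma dim_kron[simp]:
  "dim_row (kron A B) = dim_row A * dim_row B" "dim_col (kron A B) = dim_col A * dim_col B"
  by (auto simp: kron_def)

lemma kron_carrier_mat[simp]:
  "A \<in> carrier_mat a b \<Longrightarrow> B \<in> carrier_mat c d \<Longrightarrow> kron A B \<in> carrier_mat (a*c) (b*d)"
  by auto

lemma index_kron:
  "i < dim_row A * dim_row B \<Longrightarrow> j < dim_col A * dim_col B \<Longrightarrow>
   kron A B $$ (i,j) = A $$ (i div dim_row B, j div dim_col B) * B $$ (i mod dim_row B, j mod dim_col B)"
  by (simp add: kron_def)

lemma index_kron_block:
  assumes "i < dim_row A" "k < dim_row B" "j < dim_col A" "l < dim_col B"
  shows "kron A B $$ (i * dim_row B + k, j * dim_col B + l) = A $$ (i,j) * B $$ (k,l)"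
  using assms by (simp add: index_kron block_index_less)

lemma kron_mult_kron:
  assumes A: "A \<in> carrier_mat a b" and B: "B \<in> carrier_mat c d"
    and C: "C \<in> carrier_mat b p" and D: "D \<in> carrier_mat d q"
  shows "kron A B * kron C D = kron (A*C) (B*D)"
proof (rule eq_matI)
  fix i j assume "i < dim_row (kron (A*C) (B*D))" "j < dim_col (kron (A*C) (B*D))"
  then have i: "i < a*c" and j: "j < p*q" using A B C D by auto
  then have "c > 0" "q > 0" by (auto intro: gr0I)
  then have i1: "i div c < a" "i mod c < c" and j1: "j div q < p" "j mod q < q"
    using i j by (auto simp: less_mult_imp_div_less)
  have "(kron A B * kron C D) $$ (i,j) = (\<Sum>x<b. \<Sum>y<d. kron A B $$ (i,x*d+y) * kron C D $$ (x*d+y,j))"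
    using A B C D i j by (simp add: sum_lessThan_mult)
  also have "\<dots> = (\<Sum>x<b. \<Sum>y<d. (A $$ (i div c, x) * C $$ (x, j div q)) * (B $$ (i mod c, y) * D $$ (y, j mod q)))"
    using A B C D i j block_index_less by (auto intro!: sum.cong simp: index_kron)
  also have "\<dots> = (A*C) $$ (i div c, j div q) * (B*D) $$ (i mod c, j mod q)"
    using A B C D i1 j1 by (simp add: sum_product)
  also have "\<dots> = kron (A*C) (B*D) $$ (i,j)"
    using A B C D i j by (simp add: index_kron)
  finally show "(kron A B * kron C D) $$ (i,j) = kron (A*C) (B*D) $$ (i,j)" .
qed (use assms in auto)

lemma kron_one_one: "kron (1\<^sub>m a) (1\<^sub>m b) = 1\<^sub>m (a*b)"
proof (rule eq_matI)
  fix i j assume "i < dim_row (1\<^sub>m (a*b))" "j < dim_col (1\<^sub>m (a * b))"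
  then have i: "i < a*b" and j: "j < a*b" by auto
  then have b0: "b > 0" by (auto intro: gr0I)
  have "(i div b = j div b \<and> i mod b = j mod b) = (i = j)"
    by (metis div_mult_mod_eq)
  moreover have "i div b < a" "j div b < a" using i j b0 by (auto simp: less_mult_imp_div_less)
  ultimately show "kron (1\<^sub>m a) (1\<^sub>m b) $$ (i,j) = 1\<^sub>m (a*b) $$ (i,j)"
    using i j b0 by (simp add: index_kron) blast
qed auto

lemma mat_adjoint_kron: "mat_adjoint (kron A B) = kron (mat_adjoint A) (mat_adjoint B)"
proof (rule eq_matI)
  fix i j assume "i < dim_row (kron (mat_adjoint A) (mat_adjoint B))" "j < dim_col (kron (mat_adjoint A) (mat_adjoint B))"
  then have i: "i < dim_col A * dim_col B" and j: "j < dim_row A * dim_row B" by auto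
  then have "dim_col B > 0" "dim_row B > 0" by (auto intro: gr0I)
  moreover have "i div dim_col B < dim_col A" "j div dim_row B < dim_row A"
    using i j calculation by (auto simp: less_mult_imp_div_less)
  ultimately show "mat_adjoint (kron A B) $$ (i,j) = kron (mat_adjoint A) (mat_adjoint B) $$ (i,j)"
    using i j by (simp add: index_kron)
qed auto

lemma kron_assoc: "kron (kron A B) C = kron A (kron B C)"
proof (rule eq_matI)
  fix i j assume "i < dim_row (kron A (kron B C))" "j < dim_col (kron A (kron B C))"
  then have i: "i < dim_row A * (dim_row B * dim_row C)" and j: "j < dim_col A * (dim_col B * dim_col C)" by auto
  define r c r' c' where "r = dim_row B" "c = dim_col B" "r' = dim_row C" "c' = dim_col C"
  have pos: "r > 0" "r' > 0" "c > 0" "c' > 0" using i j unfolding r_c_r'_c'_def by (auto intro: gr0I)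
  have e1: "i div r' div r = i div (r * r')" "j div c' div c = j div (c*c')"
    by (simp_all add: div_mult2_eq mult.commute[of r r'] mult.commute[of c c'])
  have e2: "i div r' mod r = i mod (r*r') div r'" "j div c' mod c = j mod (c*c') div c'"
    using pos by (simp_all add: mod_mult2_eq mult.commute[of r r'] mult.commute[of c c'])
  have e3: "i mod (r*r') mod r' = i mod r'" "j mod (c*c') mod c' = j mod c'"
    by (simp_all add: mod_mult2_eq mult.commute[of r r'] mult.commute[of c c'])
  have "i div r' < dim_row A * r" "j div c' < dim_col A * c"
    using i j pos unfolding r_c_r'_c'_def by (simp_all add: less_mult_imp_div_less mult.assoc)
  then have L: "kron (kron A B) C $$ (i,j) = A $$ (i div r' div r, j div c' div c) * B $$ (i div r' mod r, j div c' mod c) * C $$ (i mod r', j mod c')"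
    using i j unfolding r_c_r'_c'_def by (simp add: index_kron mult.assoc[symmetric])
  have "i mod (r*r') < r * r'" "j mod (c*c') < c*c'" using pos by simp_all
  then have R: "kron A (kron B C) $$ (i,j) = A $$ (i div (r*r'), j div (c*c')) * (B $$ (i mod (r*r') div r', j mod (c*c') div c') * C $$ (i mod (r*r') mod r', j mod (c*c') mod c'))"
    using i j unfolding r_c_r'_c'_def by (simp add: index_kron)
  show "kron (kron A B) C $$ (i,j) = kron A (kron B C) $$ (i,j)"
    unfolding L R e1 e2 e3 by (simp add: mult.assoc)
qed (auto simp: mult.assoc)

lemma unitaryD:
  "unitary n U \<Longrightarrow> U \<in> carrier_mat n n"
  "unitary n U \<Longrightarrow> mat_adjoint U * U = 1\<^sub>m n" "unitary n U \<Longrightarrow> U * mat_adjoint U = 1\<^sub>m n"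
  by (auto simp: unitary_def)

lemma unitaryI:
  assumes "U \<in> carrier_mat n n" "mat_adjoint U * U = 1\<^sub>m n"
  shows "unitary n U"
  using assms mat_mult_left_right_inverse[of "mat_adjoint U" n U] by (auto simp: unitary_def)

lemma unitary_adjoint: "unitary n U \<Longrightarrow> unitary n (mat_adjoint U)"
  by (auto simp: unitary_def)

lemma unitary_one: "unitary n (1\<^sub>m n)"
  by (auto simp: unitary_def)

lemma unitary_cancel:
  assumes "unitary n W" "dim_row X = n"
  shows "mat_adjoint W * (W * X) = X" "W * (mat_adjoint W * X) = X"
  using assms assoc_mult_mat_dims[of "mat_adjoint W" W X] assoc_mult_mat_dims[of W "mat_adjoint W" X]
  by (auto simp: unitary_def)

lemma unitary_conj_cancel:
  assumes "unitary n W" "X \<in> carrier_mat n n"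
  shows "W * (mat_adjoint W * X * W) * mat_adjoint W = X"
proof -
  have "W \<in> carrier_mat n n" using assms(1) by (rule unitaryD)
  then have "W * (mat_adjoint W * X * W) * mat_adjoint W = (W * mat_adjoint W) * X * (W * mat_adjoint W)"
    using assms(2) by (simp add: assoc_mult_mat_dims)
  then show ?thesis using assms by (simp add: unitaryD)
qed

lemma unitary_mult:
  assumes U: "unitary n U" and W: "unitary n W"
  shows "unitary n (U * W)"
proof (rule unitaryI)
  have Uc: "U \<in> carrier_mat n n" and Wc: "W \<in> carrier_mat n n" using U W by (auto simp: unitary_def)
  then show "U * W \<in> carrier_mat n n" by auto
  have "mat_adjoint (U * W) * (U * W) = mat_adjoint W * (mat_adjoint U * (U * W))"
    using Uc Wc by (simp add: mat_adjoint_mult assoc_mult_mat_dims)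
  then show "mat_adjoint (U * W) * (U * W) = 1\<^sub>m n"
    using Uc Wc U W by (simp add: unitary_cancel unitaryD)
qed

lemma unitary_kron:
  assumes U: "unitary a U" and V: "unitary b V"
  shows "unitary (a*b) (kron U V)"
proof (rule unitaryI)
  have Uc: "U \<in> carrier_mat a a" and Vc: "V \<in> carrier_mat b b" using U V by (auto simp: unitary_def)
  then show "kron U V \<in> carrier_mat (a*b) (a*b)" by auto
  have "mat_adjoint (kron U V) * kron U V = kron (mat_adjoint U * U) (mat_adjoint V * V)"
    using Uc Vc by (simp add: mat_adjoint_kron kron_mult_kron[of _ a a _ b b _ a _ b])
  then show "mat_adjoint (kron U V) * kron U V = 1\<^sub>m (a*b)"
    using U V by (simp add: unitary_def kron_one_one)
qed

lemma mtrace_unitary_conj: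
  assumes R: "unitary n R" and X: "X \<in> carrier_mat n n"
  shows "mtrace (R * X * mat_adjoint R) = mtrace X"
proof -
  have Rc: "R \<in> carrier_mat n n" using R by (rule unitaryD)
  then have "mtrace (R * X * mat_adjoint R) = mtrace (mat_adjoint R * (R * X))"
    using X by (intro mtrace_mult_commute) auto
  then show ?thesis using unitary_cancel[OF R] X by simp
qed

section \<open>The spectral theorem for Hermitian matrices\<close>

lemma diag_of_carrier[simp]: "diag_of n d \<in> carrier_mat n n"
  by (simp add: diag_of_def)

lemma dim_diag_of[simp]: "dim_row (diag_of n d) = n" "dim_col (diag_of n d) = n"
  by (simp_all add: diag_of_def)

lemma index_diag_of_mult:
  assumes "A \<in> carrier_mat n m" "i < n" "j < m"
  shows "(diag_of n d * A) $$ (i,j) = complex_of_real (d i) * A $$ (i,j)" (is "_ = ?rhs")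
proof -
  have "(diag_of n d * A) $$ (i,j) = (\<Sum>l<n. diag_of n d $$ (i,l) * A $$ (l,j))"
    using assms by simp
  also have "\<dots> = (\<Sum>l<n. if l = i then complex_of_real (d i) * A $$ (i,j) else 0)"
    using assms by (intro sum.cong refl) (auto simp: diag_of_def)
  also have "\<dots> = ?rhs" using assms by simp
  finally show ?thesis .
qed

lemma index_mult_diag_of:
  assumes "A \<in> carrier_mat m n" "i < m" "j < n"
  shows "(A * diag_of n d) $$ (i,j) = A $$ (i,j) * complex_of_real (d j)" (is "_ = ?rhs")
proof -
  have "(A * diag_of n d) $$ (i,j) = (\<Sum>l<n. A $$ (i,l) * diag_of n d $$ (l,j))"
    using assms by simp
  also have "\<dots> = (\<Sum>l<n. if l = j then A $$ (i,j) * complex_of_real (d j) else 0)"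
    using assms by (intro sum.cong refl) (auto simp: diag_of_def)
  also have "\<dots> = ?rhs" using assms by simp
  finally show ?thesis .
qed

lemma index_diag_of_conj:
  assumes W: "W \<in> carrier_mat n n" and i: "i < n" and j: "j < n"
  shows "(W * diag_of n d * mat_adjoint W) $$ (i,j) = (\<Sum>k<n. W $$ (i,k) * complex_of_real (d k) * cnj (W $$ (j,k)))"
  by (subst index_mult_mat_sum)
    (use assms in \<open>auto simp: index_mult_diag_of simp del: index_mult_mat_sum intro!: sum.cong\<close>)

lemma cscalar_prod_self:
  fixes w :: "complex vec"
  assumes "w \<in> carrier_vec n"
  shows "w \<bullet>c w = complex_of_real (\<Sum>k<n. (cmod (w $ k))^2)"
proof -
  have e: "w$k * cnj (w$k) = complex_of_real ((cmod (w$k))^2)" for k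
    by (metis complex_norm_square of_real_power)
  have "w \<bullet>c w = (\<Sum>k<n. w$k * cnj (w$k))"
    using assms by (auto simp: scalar_prod_def atLeast0LessThan intro!: sum.cong)
  then show ?thesis unfolding e of_real_sum .
qed

lemma unitary_normalized_corthogonal:
  fixes ws :: "complex vec list"
  assumes ws: "set ws \<subseteq> carrier_vec n" "corthogonal ws" "length ws = n"
  defines "s \<equiv> \<lambda>i. sqrt (\<Sum>k<n. (cmod (ws ! i $ k))^2)"
  shows "unitary n (mat n n (\<lambda>(k,i). ws ! i $ k / complex_of_real (s i)))"
proof -
  have wsc: "ws ! i \<in> carrier_vec n" if "i < n" for i using ws that by auto
  have sq: "ws ! i \<bullet>c ws ! i = complex_of_real ((s i)^2)" if "i < n" for i
  proof -
    have s2: "(s i)^2 = (\<Sum>k<n. (cmod (ws ! i $ k))^2)"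
      unfolding s_def by (rule real_sqrt_pow2, rule sum_nonneg, simp)
    from cscalar_prod_self[OF wsc[OF that]] show ?thesis unfolding s2 .
  qed
  have spos: "s i > 0" if i: "i < n" for i
  proof -
    have "ws ! i \<bullet>c ws ! i \<noteq> 0" using ws(2,3) i unfolding corthogonal_def by auto
    then have "s i \<noteq> 0" using sq[OF i] by auto
    moreover have "s i \<ge> 0" unfolding s_def by (simp add: sum_nonneg)
    ultimately show "s i > 0" by simp
  qed
  define W where "W = mat n n (\<lambda>(k,i). ws ! i $ k / complex_of_real (s i))"
  have Wc: "W \<in> carrier_mat n n" unfolding W_def by simp
  have "mat_adjoint W * W = 1\<^sub>m n"
  proof (rule eq_matI)
    fix i j assume "i < dim_row (1\<^sub>m n)" "j < dim_col (1\<^sub>m n)"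
    then have i: "i < n" and j: "j < n" by auto
    have "(\<Sum>k<n. cnj (ws ! i $ k) * ws ! j $ k) = ws ! j \<bullet>c ws ! i"
      using wsc[OF i] wsc[OF j] by (auto simp: scalar_prod_def atLeast0LessThan mult.commute intro!: sum.cong)
    then have e: "(mat_adjoint W * W) $$ (i,j) = ws ! j \<bullet>c ws ! i / (complex_of_real (s i) * complex_of_real (s j))"
      using i j Wc by (simp add: W_def sum_divide_distrib[symmetric])
    show "(mat_adjoint W * W) $$ (i,j) = 1\<^sub>m n $$ (i,j)"
    proof (cases "i = j")
      case True
      then show ?thesis using e sq[OF i] spos[OF i] i by (simp add: power2_eq_square)
    next
      case False
      then have "ws ! j \<bullet>c ws ! i = 0" using ws(2,3) i j unfolding corthogonal_def by auto
      then show ?thesis using e False i j by simp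
    qed
  qed (use Wc in auto)
  then show ?thesis using Wc unfolding W_def by (intro unitaryI)
qed

lemma unitary_first_column_parallel:
  fixes v :: "complex vec"
  assumes v: "v \<in> carrier_vec n" and v0: "v \<noteq> 0\<^sub>v n"
  shows "\<exists>W c. unitary n W \<and> (\<forall>k<n. W $$ (k,0) = c * v $ k)"
proof -
  interpret cof_vec_space n "TYPE(complex)" .
  define b where "b = basis_completion v"
  from basis_completion[OF v v0, folded b_def]
  have dist_b: "distinct b" and indep: "\<not> lin_dep (set b)" and b: "set b \<subseteq> carrier_vec n"
    and hdb: "hd b = v" and len_b: "length b = n" by auto
  have n: "n \<noteq> 0" using v v0 by (auto intro!: eq_vecI)
  from hdb len_b n obtain vs where bv: "b = v # vs" by (cases b) auto
  define ws where "ws = gram_schmidt n b"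
  from gram_schmidt_result[OF b dist_b indep refl, folded ws_def]
  have ws: "set ws \<subseteq> carrier_vec n" "corthogonal ws" "length ws = n" by (auto simp: len_b)
  from gram_schmidt_hd[OF v, of vs, folded bv] have "hd ws = v" unfolding ws_def .
  then have ws0: "ws ! 0 = v" using ws(3) n by (cases ws) auto
  let ?s = "\<lambda>i. sqrt (\<Sum>k<n. (cmod (ws ! i $ k))^2)"
  let ?W = "mat n n (\<lambda>(k,i). ws ! i $ k / complex_of_real (?s i))"
  have "unitary n ?W" by (rule unitary_normalized_corthogonal[OF ws])
  moreover have "\<forall>k<n. ?W $$ (k,0) = (1 / complex_of_real (?s 0)) * v $ k" using n ws0 by auto
  ultimately show ?thesis by blast
qed

definition one_dsum :: "nat \<Rightarrow> complex mat \<Rightarrow> complex mat" where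
  "one_dsum m W = mat (Suc m) (Suc m)
     (\<lambda>(i,j). if i = 0 then (if j = 0 then 1 else 0) else if j = 0 then 0 else W $$ (i-1, j-1))"

lemma one_dsum_carrier: "one_dsum m W \<in> carrier_mat (Suc m) (Suc m)"
  by (simp add: one_dsum_def)

lemma index_one_dsum[simp]:
  "one_dsum m W $$ (0,0) = 1"
  "j < m \<Longrightarrow> one_dsum m W $$ (0,Suc j) = 0"
  "i < m \<Longrightarrow> one_dsum m W $$ (Suc i,0) = 0"
  "i < m \<Longrightarrow> j < m \<Longrightarrow> one_dsum m W $$ (Suc i,Suc j) = W $$ (i,j)"
  by (simp_all add: one_dsum_def)

lemma mat_eq_Suc_blocks:
  fixes A B :: "complex mat"
  assumes "A \<in> carrier_mat (Suc m) (Suc m)" "B \<in> carrier_mat (Suc m) (Suc m)"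
    and "A $$ (0,0) = B $$ (0,0)"
    and "\<And>j. j < m \<Longrightarrow> A $$ (0,Suc j) = B $$ (0,Suc j)"
    and "\<And>i. i < m \<Longrightarrow> A $$ (Suc i,0) = B $$ (Suc i,0)"
    and "\<And>i j. i < m \<Longrightarrow> j < m \<Longrightarrow> A $$ (Suc i,Suc j) = B $$ (Suc i,Suc j)"
  shows "A = B"
proof (rule eq_matI)
  fix i j assume "i < dim_row B" "j < dim_col B"
  then show "A $$ (i,j) = B $$ (i,j)"
    using assms by (cases i; cases j) auto
qed (use assms in auto)

lemma unitary_one_dsum:
  assumes W: "unitary m W"
  shows "unitary (Suc m) (one_dsum m W)"
proof (rule unitaryI[OF one_dsum_carrier])
  have Wc: "W \<in> carrier_mat m m" and Wu: "mat_adjoint W * W = 1\<^sub>m m" using W by (auto simp: unitary_def)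
  let ?W = "one_dsum m W"
  have entry: "(mat_adjoint ?W * ?W) $$ (i,j) = cnj (?W $$ (0,i)) * ?W $$ (0,j) + (\<Sum>k<m. cnj (?W $$ (Suc k,i)) * ?W $$ (Suc k,j))"
    if "i < Suc m" "j < Suc m" for i j
  proof -
    have "(mat_adjoint ?W * ?W) $$ (i,j) = (\<Sum>k<Suc m. cnj (?W $$ (k,i)) * ?W $$ (k,j))"
      using one_dsum_carrier[of m W] that by (auto simp del: sum.lessThan_Suc intro!: sum.cong)
    then show ?thesis by (simp only: sum.lessThan_Suc_shift)
  qed
  show "mat_adjoint ?W * ?W = 1\<^sub>m (Suc m)"
  proof (rule mat_eq_Suc_blocks)
    show "mat_adjoint ?W * ?W \<in> carrier_mat (Suc m) (Suc m)" using one_dsum_carrier[of m W] by auto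
    show "(mat_adjoint ?W * ?W) $$ (Suc i,Suc j) = 1\<^sub>m (Suc m) $$ (Suc i,Suc j)" if "i < m" "j < m" for i j
    proof -
      have "(\<Sum>k<m. cnj (?W $$ (Suc k,Suc i)) * ?W $$ (Suc k,Suc j)) = (mat_adjoint W * W) $$ (i,j)"
        using Wc that by simp
      then show ?thesis using entry[of "Suc i" "Suc j"] Wu that by simp
    qed
  qed (auto simp: entry)
qed

lemma one_dsum_diag_conj:
  assumes Wc: "W \<in> carrier_mat m m" and Bc: "B \<in> carrier_mat (Suc m) (Suc m)"
    and B00: "B $$ (0,0) = complex_of_real r"
    and B0S: "\<And>j. j < m \<Longrightarrow> B $$ (0,Suc j) = 0" and BS0: "\<And>j. j < m \<Longrightarrow> B $$ (Suc j,0) = 0"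
    and BSS: "\<And>i j. i < m \<Longrightarrow> j < m \<Longrightarrow> B $$ (Suc i,Suc j) = (W * diag_of m d * mat_adjoint W) $$ (i,j)"
  shows "B = one_dsum m W * diag_of (Suc m) (\<lambda>i. if i = 0 then r else d (i-1)) * mat_adjoint (one_dsum m W)"
    (is "B = ?W * diag_of (Suc m) ?d * mat_adjoint ?W")
proof -
  have entry: "(?W * diag_of (Suc m) ?d * mat_adjoint ?W) $$ (i,j) =
      ?W $$ (i,0) * complex_of_real r * cnj (?W $$ (j,0)) + (\<Sum>k<m. ?W $$ (i,Suc k) * complex_of_real (d k) * cnj (?W $$ (j,Suc k)))"
    if "i < Suc m" "j < Suc m" for i j
    using index_diag_of_conj[OF one_dsum_carrier[of m W] that, of ?d] by (simp only: sum.lessThan_Suc_shift) simp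
  show ?thesis
  proof (rule mat_eq_Suc_blocks[OF Bc])
    show "?W * diag_of (Suc m) ?d * mat_adjoint ?W \<in> carrier_mat (Suc m) (Suc m)"
      using one_dsum_carrier[of m W] by auto
    show "B $$ (Suc i,Suc j) = (?W * diag_of (Suc m) ?d * mat_adjoint ?W) $$ (Suc i,Suc j)"
      if "i < m" "j < m" for i j
      using entry[of "Suc i" "Suc j"] BSS[OF that] index_diag_of_conj[OF Wc that, of d] that by simp
  qed (auto simp: entry B00 B0S BS0)
qed

lemma unitary_conj_first_column_eigenvector:
  assumes A: "A \<in> carrier_mat n n" and W: "unitary n W" and v: "v \<in> carrier_vec n"
    and Av: "A *\<^sub>v v = e \<cdot>\<^sub>v v" and col0: "\<forall>k<n. W $$ (k,0) = c * v $ k" and i: "i < n"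
  shows "(mat_adjoint W * A * W) $$ (i,0) = (if i = 0 then e else 0)"
proof -
  have Wc: "W \<in> carrier_mat n n" using W by (rule unitaryD)
  have n0: "0 < n" using i by simp
  have AW: "(A * W) $$ (k,0) = e * W $$ (k,0)" if k: "k < n" for k
  proof -
    have "(A * W) $$ (k,0) = c * (A *\<^sub>v v) $ k"
      using A Wc v k n0 col0 by (auto simp: scalar_prod_def atLeast0LessThan sum_distrib_left mult_ac intro!: sum.cong)
    then show ?thesis using Av k v col0 by auto
  qed
  have "mat_adjoint W * A * W = mat_adjoint W * (A * W)"
    using assoc_mult_mat[OF mat_adjoint_carrier[OF Wc] A Wc] .
  then have "(mat_adjoint W * A * W) $$ (i,0) = (\<Sum>k<n. mat_adjoint W $$ (i,k) * (A * W) $$ (k,0))"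
    using index_mult_mat_sum[of i "mat_adjoint W" 0 "A * W"] A Wc i n0 by (simp del: index_mult_mat_sum)
  also have "\<dots> = e * (mat_adjoint W * W) $$ (i,0)"
    using Wc i n0 AW by (auto simp: sum_distrib_left mult_ac intro!: sum.cong)
  also have "\<dots> = (if i = 0 then e else 0)" using W i n0 by (simp add: unitaryD)
  finally show ?thesis .
qed

lemma hermitian_deflation:
  assumes hB: "hermitian B" and Bc: "B \<in> carrier_mat (Suc m) (Suc m)"
    and Bcol: "\<And>i. i < Suc m \<Longrightarrow> B $$ (i,0) = (if i = 0 then e else 0)"
    and IH: "\<And>A. A \<in> carrier_mat m m \<Longrightarrow> mat_adjoint A = A \<Longrightarrow>
      \<exists>W d. unitary m W \<and> A = W * diag_of m d * mat_adjoint W"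
  shows "\<exists>W d. unitary (Suc m) W \<and> B = W * diag_of (Suc m) d * mat_adjoint W"
proof -
  have B00: "B $$ (0,0) = e" using Bcol[of 0] by simp
  have "e = cnj e" using hermitian_entry[OF hB, of 0 0] Bc unfolding B00 by simp
  then have e_real: "e = complex_of_real (Re e)" by (metis Reals_cnj_iff of_real_Re)
  have Brow: "B $$ (0,Suc j) = 0" if "j < m" for j
    using hermitian_entry[OF hB, of 0 "Suc j"] Bc Bcol[of "Suc j"] that by simp
  define A where "A = mat m m (\<lambda>(i,j). B $$ (Suc i, Suc j))"
  have Ac: "A \<in> carrier_mat m m" unfolding A_def by simp
  have "mat_adjoint A = A"
  proof (rule eq_matI)
    fix i j assume "i < dim_row A" "j < dim_col A"
    then show "mat_adjoint A $$ (i,j) = A $$ (i,j)"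
      using hermitian_entry[OF hB, of "Suc i" "Suc j"] Bc Ac by (simp add: A_def)
  qed (use Ac in auto)
  then obtain W d where W: "unitary m W" and Ad: "A = W * diag_of m d * mat_adjoint W"
    using IH[OF Ac] by blast
  have "B = one_dsum m W * diag_of (Suc m) (\<lambda>i. if i = 0 then Re e else d (i-1)) * mat_adjoint (one_dsum m W)"
  proof (rule one_dsum_diag_conj[OF unitaryD(1)[OF W] Bc])
    show "B $$ (0,0) = complex_of_real (Re e)" using B00 e_real by simp
    show "\<And>i j. i < m \<Longrightarrow> j < m \<Longrightarrow> B $$ (Suc i,Suc j) = (W * diag_of m d * mat_adjoint W) $$ (i,j)"
      unfolding Ad[symmetric] by (simp add: A_def)
  qed (use Brow Bcol in auto)
  then show ?thesis using unitary_one_dsum[OF W] by blast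
qed

theorem hermitian_spectral_decomposition:
  fixes A :: "complex mat"
  shows "A \<in> carrier_mat n n \<Longrightarrow> mat_adjoint A = A \<Longrightarrow> \<exists>W d. unitary n W \<and> A = W * diag_of n d * mat_adjoint W"
proof (induction n arbitrary: A)
  case 0
  then have "A = 1\<^sub>m 0 * diag_of 0 (\<lambda>_. 0) * mat_adjoint (1\<^sub>m 0)" by (intro eq_matI) auto
  then show ?case using unitary_one by blast
next
  case (Suc m)
  have A: "A \<in> carrier_mat (Suc m) (Suc m)" and H: "mat_adjoint A = A" by fact+
  obtain e where "eigenvalue A e" using spectrum_non_empty[OF A] by (auto simp: spectrum_def)
  then obtain v where "eigenvector A v e" unfolding eigenvalue_def by auto
  then have v: "v \<in> carrier_vec (Suc m)" and v0: "v \<noteq> 0\<^sub>v (Suc m)" and Av: "A *\<^sub>v v = e \<cdot>\<^sub>v v"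
    using A unfolding eigenvector_def by auto
  obtain W0 c where W0: "unitary (Suc m) W0" and col0: "\<forall>k<Suc m. W0 $$ (k,0) = c * v $ k"
    using unitary_first_column_parallel[OF v v0] by blast
  have W0c: "W0 \<in> carrier_mat (Suc m) (Suc m)" using W0 by (rule unitaryD)
  define B where "B = mat_adjoint W0 * A * W0"
  have Bc: "B \<in> carrier_mat (Suc m) (Suc m)" unfolding B_def using A W0c by auto
  have "hermitian B"
    using self_adjoint_conj[OF A H mat_adjoint_carrier[OF W0c]] Bc
    by (auto simp: B_def hermitian_def square_mat.simps)
  then obtain W1 d where W1: "unitary (Suc m) W1" and BW: "B = W1 * diag_of (Suc m) d * mat_adjoint W1"
    using hermitian_deflation[OF _ Bc _ Suc.IH] unitary_conj_first_column_eigenvector[OF A W0 v Av col0]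
    unfolding B_def by blast
  have "A = W0 * B * mat_adjoint W0"
    unfolding B_def using unitary_conj_cancel[OF W0 A, symmetric] .
  also have "\<dots> = (W0 * W1) * diag_of (Suc m) d * mat_adjoint (W0 * W1)"
    unfolding BW by (rule conj_mult_conj[OF W0c unitaryD(1)[OF W1] diag_of_carrier])
  finally show ?case using unitary_mult[OF W0 W1] by blast
qed

section \<open>Unitary covariance of the functional calculus\<close>

text \<open>Two spectral decompositions of the same matrix are intertwined by the unitary
\<open>W\<^sup>\<dagger> W'\<close>, whose entries vanish unless the two eigenvalues agree; hence it also
intertwines \<open>h\<close> of the eigenvalues, for any \<open>h\<close>.\<close>

lemma diag_calculus_well_defined:
  assumes W: "unitary n W" and W': "unitary n W'"
    and eq: "W * diag_of n d * mat_adjoint W = W' * diag_of n d' * mat_adjoint W'"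
  shows "W * diag_of n (\<lambda>i. h (d i)) * mat_adjoint W = W' * diag_of n (\<lambda>i. h (d' i)) * mat_adjoint W'"
proof -
  have Wc: "W \<in> carrier_mat n n" and W'c: "W' \<in> carrier_mat n n" using W W' by (auto simp: unitary_def)
  define A where "A = mat_adjoint W * W'"
  have Ac: "A \<in> carrier_mat n n" unfolding A_def using Wc W'c by auto
  note dims = carrier_matD[OF Wc] carrier_matD[OF W'c] carrier_matD[OF Ac]
  have "diag_of n d * A = mat_adjoint W * (W * diag_of n d * mat_adjoint W) * W'"
    unfolding A_def using dims by (simp add: assoc_mult_mat_dims unitary_cancel[OF W])
  also have "\<dots> = A * diag_of n d'"
    unfolding eq A_def using dims by (simp add: assoc_mult_mat_dims unitary_cancel[OF W'] unitaryD[OF W'])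
  finally have DA: "diag_of n d * A = A * diag_of n d'" .
  have HA: "diag_of n (\<lambda>i. h (d i)) * A = A * diag_of n (\<lambda>i. h (d' i))"
  proof (rule eq_matI)
    fix i j assume "i < dim_row (A * diag_of n (\<lambda>i. h (d' i)))" "j < dim_col (A * diag_of n (\<lambda>i. h (d' i)))"
    then have i: "i < n" and j: "j < n" using Ac by auto
    have "complex_of_real (d i) * A $$ (i,j) = A $$ (i,j) * complex_of_real (d' j)"
      using arg_cong[OF DA, of "\<lambda>M. M $$ (i,j)"] index_diag_of_mult[OF Ac i j] index_mult_diag_of[OF Ac i j] by simp
    then have "A $$ (i,j) = 0 \<or> d i = d' j" by (auto simp: mult.commute)
    then show "(diag_of n (\<lambda>i. h (d i)) * A) $$ (i,j) = (A * diag_of n (\<lambda>i. h (d' i))) $$ (i,j)"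
      using index_diag_of_mult[OF Ac i j] index_mult_diag_of[OF Ac i j] by auto
  qed (use Ac in auto)
  have W'eq: "W' = W * A" unfolding A_def using dims by (simp add: assoc_mult_mat_dims[symmetric] unitaryD[OF W])
  have AA: "A * mat_adjoint A = 1\<^sub>m n"
    unfolding A_def using dims by (simp add: mat_adjoint_mult assoc_mult_mat_dims unitary_cancel[OF W'] unitaryD[OF W])
  have "W' * diag_of n (\<lambda>i. h (d' i)) * mat_adjoint W' = W * (A * diag_of n (\<lambda>i. h (d' i))) * mat_adjoint A * mat_adjoint W"
    unfolding W'eq using dims by (simp add: mat_adjoint_mult assoc_mult_mat_dims)
  also have "\<dots> = W * diag_of n (\<lambda>i. h (d i)) * (A * mat_adjoint A) * mat_adjoint W"
    unfolding HA[symmetric] using dims by (simp add: assoc_mult_mat_dims)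
  finally show ?thesis unfolding AA using dims by simp
qed

definition unitarily_diagonalizable :: "complex mat \<Rightarrow> bool" where
  "unitarily_diagonalizable M \<longleftrightarrow>
     (\<exists>W d. unitary (dim_row M) W \<and> M = W * diag_of (dim_row M) d * mat_adjoint W)"

lemma hermitian_unitarily_diagonalizable:
  "M \<in> carrier_mat n n \<Longrightarrow> mat_adjoint M = M \<Longrightarrow> unitarily_diagonalizable M"
  using hermitian_spectral_decomposition[of M n] unfolding unitarily_diagonalizable_def by auto

lemma mfun_spectral:
  assumes W: "unitary n W" and M: "M = W * diag_of n d * mat_adjoint W"
  shows "mfun f M = W * diag_of n (\<lambda>i. if d i = 0 then 0 else f (d i)) * mat_adjoint W"
proof -
  have n: "dim_row M = n" using W M by (auto simp: unitary_def)
  show ?thesis unfolding mfun_def n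
  proof (rule some_equality)
    fix N assume "\<exists>W' d'. unitary n W' \<and> M = W' * diag_of n d' * mat_adjoint W' \<and>
        N = W' * diag_of n (\<lambda>i. if d' i = 0 then 0 else f (d' i)) * mat_adjoint W'"
    then obtain W' d' where W': "unitary n W'" and M': "M = W' * diag_of n d' * mat_adjoint W'"
      and N: "N = W' * diag_of n (\<lambda>i. if d' i = 0 then 0 else f (d' i)) * mat_adjoint W'" by blast
    show "N = W * diag_of n (\<lambda>i. if d i = 0 then 0 else f (d i)) * mat_adjoint W"
      unfolding N by (rule diag_calculus_well_defined[OF W' W]) (use M M' in simp)
  qed (use W M in blast)
qed

text \<open>Off its intended domain \<open>mfun\<close> is \<open>SOME N. False\<close>, the same junk value for every
function and every matrix.\<close>

lemma mfun_not_diagonalizable: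
  assumes "\<not> unitarily_diagonalizable M" "\<not> unitarily_diagonalizable M'"
  shows "mfun f M = mfun g M'"
proof -
  have "mfun f M = (SOME N. False)" "mfun g M' = (SOME N. False)"
    using assms unfolding mfun_def unitarily_diagonalizable_def by (metis (no_types, lifting))+
  then show ?thesis by simp
qed

lemma mfun_carrier:
  assumes "unitarily_diagonalizable M"
  shows "mfun f M \<in> carrier_mat (dim_row M) (dim_row M)"
proof -
  obtain W d where W: "unitary (dim_row M) W" and M: "M = W * diag_of (dim_row M) d * mat_adjoint W"
    using assms unfolding unitarily_diagonalizable_def by blast
  then show ?thesis unfolding mfun_spectral[OF W M] using unitaryD(1)[OF W] by auto
qed

lemma unitarily_diagonalizable_conj:
  assumes Q: "unitary n Q" and M: "M \<in> carrier_mat n n" and D: "unitarily_diagonalizable M"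
  shows "unitarily_diagonalizable (Q * M * mat_adjoint Q)"
    and "mfun f (Q * M * mat_adjoint Q) = Q * mfun f M * mat_adjoint Q"
proof -
  obtain W d where W: "unitary n W" and MW: "M = W * diag_of n d * mat_adjoint W"
    using D M unfolding unitarily_diagonalizable_def by auto
  have Qc: "Q \<in> carrier_mat n n" and Wc: "W \<in> carrier_mat n n" using Q W by (auto simp: unitary_def)
  have QW: "unitary n (Q * W)" using unitary_mult[OF Q W] .
  have e: "Q * M * mat_adjoint Q = (Q * W) * diag_of n d * mat_adjoint (Q * W)"
    unfolding MW by (rule conj_mult_conj[OF Qc Wc diag_of_carrier])
  show "unitarily_diagonalizable (Q * M * mat_adjoint Q)"
    unfolding unitarily_diagonalizable_def using QW e Qc by auto
  show "mfun f (Q * M * mat_adjoint Q) = Q * mfun f M * mat_adjoint Q"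
    unfolding mfun_spectral[OF QW e] mfun_spectral[OF W MW]
    using conj_mult_conj[OF Qc Wc diag_of_carrier] by simp
qed

lemma mfun_unitary_conj:
  assumes Q: "unitary n Q" and M: "M \<in> carrier_mat n n"
  shows "mfun f (Q * M * mat_adjoint Q) =
    (if unitarily_diagonalizable M then Q * mfun f M * mat_adjoint Q else mfun f M)"
proof (cases "unitarily_diagonalizable M")
  case False
  have "\<not> unitarily_diagonalizable (Q * M * mat_adjoint Q)"
  proof
    assume diag: "unitarily_diagonalizable (Q * M * mat_adjoint Q)"
    have "Q * M * mat_adjoint Q \<in> carrier_mat n n" using unitaryD(1)[OF Q] M by auto
    from unitarily_diagonalizable_conj(1)[OF unitary_adjoint[OF Q] this diag]
    have "unitarily_diagonalizable (mat_adjoint Q * (Q * M * mat_adjoint Q) * mat_adjoint (mat_adjoint Q))" .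
    then show False
      using False unitary_conj_cancel[OF unitary_adjoint[OF Q] M] by simp
  qed
  then show ?thesis using False mfun_not_diagonalizable by simp
qed (use unitarily_diagonalizable_conj(2)[OF Q M] in simp)

section \<open>Tripartite systems and partial traces\<close>

text \<open>On \<open>\<complex>\<^sup>a \<otimes> \<complex>\<^sup>b \<otimes> \<complex>\<^sup>e\<close> the basis vector \<open>|x\<rangle>|k\<rangle>|i\<rangle>\<close> has index \<open>idx3 b e x k i\<close>.\<close>

definition idx3 :: "nat \<Rightarrow> nat \<Rightarrow> nat \<Rightarrow> nat \<Rightarrow> nat \<Rightarrow> nat" where
  "idx3 b e x k i = (x*b+k)*e+i"

lemma idx3_less: "x < a \<Longrightarrow> k < b \<Longrightarrow> i < e \<Longrightarrow> idx3 b e x k i < a*b*e"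
  unfolding idx3_def by (intro block_index_less) auto

lemma idx3_div_mod:
  assumes "k < b" "i < e"
  shows "idx3 b e x k i div e = x*b+k" "idx3 b e x k i mod e = i"
    "idx3 b e x k i div e div b = x" "idx3 b e x k i div e mod b = k"
  using assms by (auto simp: idx3_def)

lemma idx3_eq_block: "k < b \<Longrightarrow> i < e \<Longrightarrow> idx3 b e x k i = x * (b*e) + (k*e+i)"
  unfolding idx3_def by (simp add: algebra_simps)

lemma idx3_cases:
  assumes "I < a*b*e"
  obtains x k i where "I = idx3 b e x k i" "x < a" "k < b" "i < e"
proof
  have "e > 0" "b > 0" using assms by (auto intro: gr0I)
  moreover have "I div e < a*b" using assms calculation by (simp add: less_mult_imp_div_less)
  ultimately show "I div e div b < a" "I div e mod b < b" "I mod e < e"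
    by (simp_all add: less_mult_imp_div_less)
  show "I = idx3 b e (I div e div b) (I div e mod b) (I mod e)" unfolding idx3_def by simp
qed

lemma sum_idx3: "(\<Sum>L<a*b*e. f L) = (\<Sum>x<a. \<Sum>k<b. \<Sum>i<e. f (idx3 b e x k i))"
  unfolding idx3_def by (simp add: sum_lessThan_mult)

lemma sum_idx3_single:
  fixes x a b e i :: nat
  assumes x: "x < a" and i: "i < e"
    and z: "\<And>x' k i'. x' < a \<Longrightarrow> k < b \<Longrightarrow> i' < e \<Longrightarrow> x' \<noteq> x \<or> i' \<noteq> i \<Longrightarrow> h x' k i' = 0"
  shows "(\<Sum>x'<a. \<Sum>k<b. \<Sum>i'<e. h x' k i') = (\<Sum>k<b. h x k i)"
proof -
  have "(\<Sum>x'<a. \<Sum>k<b. \<Sum>i'<e. h x' k i') = (\<Sum>k<b. \<Sum>i'<e. h x k i')"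
    using x z by (intro sum_eq_single) (auto intro!: sum.neutral)
  also have "\<dots> = (\<Sum>k<b. h x k i)"
    using x i z by (intro sum.cong refl sum_eq_single) auto
  finally show ?thesis .
qed

lemma index_mult_idx3:
  assumes "dim_col A = a*b*e" "dim_row B = a*b*e" "I < dim_row A" "J < dim_col B"
  shows "(A * B) $$ (I,J) = (\<Sum>x<a. \<Sum>k<b. \<Sum>i<e. A $$ (I, idx3 b e x k i) * B $$ (idx3 b e x k i, J))"
  using assms by (simp add: sum_idx3[of "\<lambda>L. A $$ (I,L) * B $$ (L,J)"])

lemma sum_swap3: "(\<Sum>x\<in>A. \<Sum>y\<in>B. \<Sum>z\<in>C. f x y z) = (\<Sum>z\<in>C. \<Sum>y\<in>B. \<Sum>x\<in>A. f x y z)"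
proof -
  have "(\<Sum>x\<in>A. \<Sum>y\<in>B. \<Sum>z\<in>C. f x y z) = (\<Sum>x\<in>A. \<Sum>z\<in>C. \<Sum>y\<in>B. f x y z)"
    by (rule sum.cong[OF refl], rule sum.swap)
  also have "\<dots> = (\<Sum>z\<in>C. \<Sum>x\<in>A. \<Sum>y\<in>B. f x y z)" by (rule sum.swap)
  also have "\<dots> = (\<Sum>z\<in>C. \<Sum>y\<in>B. \<Sum>x\<in>A. f x y z)" by (rule sum.cong[OF refl], rule sum.swap)
  finally show ?thesis .
qed

definition mid_op :: "nat \<Rightarrow> nat \<Rightarrow> complex mat \<Rightarrow> complex mat" where
  "mid_op a e V = kron (1\<^sub>m a) (kron V (1\<^sub>m e))"

lemma mid_op_carrier: "V \<in> carrier_mat b b \<Longrightarrow> mid_op a e V \<in> carrier_mat (a*b*e) (a*b*e)"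
  unfolding mid_op_def by (auto simp: mult.assoc)

lemma index_mid_op:
  assumes V: "V \<in> carrier_mat b b" and "x < a" "y < a" "k < b" "k' < b" "i < e" "j < e"
  shows "mid_op a e V $$ (idx3 b e x k i, idx3 b e y k' j) = (if x = y \<and> i = j then V $$ (k,k') else 0)"
proof -
  have "k*e+i < b*e" "k'*e+j < b*e" using assms by (auto intro: block_index_less)
  then have "mid_op a e V $$ (idx3 b e x k i, idx3 b e y k' j) = 1\<^sub>m a $$ (x,y) * kron V (1\<^sub>m e) $$ (k*e+i, k'*e+j)"
    unfolding mid_op_def using assms index_kron_block[of x "1\<^sub>m a" "k*e+i" "kron V (1\<^sub>m e)" y "k'*e+j"]
    by (simp add: idx3_eq_block)
  also have "kron V (1\<^sub>m e) $$ (k*e+i, k'*e+j) = V $$ (k,k') * 1\<^sub>m e $$ (i,j)"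
    using assms index_kron_block[of k V i "1\<^sub>m e" k' j] by simp
  finally show ?thesis using assms by auto
qed

lemma mat_adjoint_mid_op: "mat_adjoint (mid_op a e V) = mid_op a e (mat_adjoint V)"
  unfolding mid_op_def by (simp add: mat_adjoint_kron)

lemma unitary_mid_op: "unitary b V \<Longrightarrow> unitary (a*b*e) (mid_op a e V)"
  unfolding mid_op_def using unitary_kron[OF unitary_one unitary_kron[OF _ unitary_one]]
  by (simp add: mult.assoc)

lemma index_mid_op_mult:
  assumes V: "V \<in> carrier_mat b b" and M: "dim_row M = a*b*e" and x: "x < a" and k: "k < b" and i: "i < e"
    and J: "J < dim_col M"
  shows "(mid_op a e V * M) $$ (idx3 b e x k i, J) = (\<Sum>k'<b. V $$ (k,k') * M $$ (idx3 b e x k' i, J))"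
proof -
  have "(mid_op a e V * M) $$ (idx3 b e x k i, J) =
      (\<Sum>x'<a. \<Sum>k'<b. \<Sum>i'<e. mid_op a e V $$ (idx3 b e x k i, idx3 b e x' k' i') * M $$ (idx3 b e x' k' i', J))"
    using mid_op_carrier[OF V, of a e] M J idx3_less[OF x k i] by (intro index_mult_idx3) auto
  also have "\<dots> = (\<Sum>k'<b. V $$ (k,k') * M $$ (idx3 b e x k' i, J))"
    using x k i by (subst sum_idx3_single) (auto simp: index_mid_op[OF V])
  finally show ?thesis .
qed

lemma index_mult_mid_op:
  assumes V: "V \<in> carrier_mat b b" and M: "dim_col M = a*b*e" and y: "y < a" and k: "k < b" and j: "j < e"
    and I: "I < dim_row M"
  shows "(M * mid_op a e V) $$ (I, idx3 b e y k j) = (\<Sum>k'<b. M $$ (I, idx3 b e y k' j) * V $$ (k',k))"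
proof -
  have "(M * mid_op a e V) $$ (I, idx3 b e y k j) =
      (\<Sum>x'<a. \<Sum>k'<b. \<Sum>i'<e. M $$ (I, idx3 b e x' k' i') * mid_op a e V $$ (idx3 b e x' k' i', idx3 b e y k j))"
    using mid_op_carrier[OF V, of a e] M I idx3_less[OF y k j] by (intro index_mult_idx3) auto
  also have "\<dots> = (\<Sum>k'<b. M $$ (I, idx3 b e y k' j) * V $$ (k',k))"
    using y k j by (subst sum_idx3_single) (auto simp: index_mid_op[OF V])
  finally show ?thesis .
qed

lemma index_ptrace_mid:
  assumes "x < a" "y < a" "i < e" "j < e"
  shows "ptrace_mid a b e M $$ (x*e+i, y*e+j) = (\<Sum>k<b. M $$ (idx3 b e x k i, idx3 b e y k j))"
  using assms by (simp add: ptrace_mid_def idx3_def block_index_less)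

lemma index_mid_op_conj:
  assumes Vc: "V \<in> carrier_mat b b" and w: "dim_row w = a*b*e" "dim_col w = a*b*e"
    and x: "x < a" and y: "y < a" and k: "k < b" and i: "i < e" and j: "j < e"
  shows "(mid_op a e V * w * mat_adjoint (mid_op a e V)) $$ (idx3 b e x k i, idx3 b e y k j) =
    (\<Sum>k''<b. \<Sum>k'<b. cnj (V $$ (k,k'')) * V $$ (k,k') * w $$ (idx3 b e x k' i, idx3 b e y k'' j))"
proof -
  let ?Q = "mid_op a e V"
  have QW: "(?Q * w) $$ (idx3 b e x k i, idx3 b e y k'' j) = (\<Sum>k'<b. V $$ (k,k') * w $$ (idx3 b e x k' i, idx3 b e y k'' j))"
    if "k'' < b" for k''
    using index_mid_op_mult[OF Vc _ x k i] w idx3_less[OF y that j] by simp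
  have "(?Q * w * mat_adjoint ?Q) $$ (idx3 b e x k i, idx3 b e y k j)
      = (\<Sum>k''<b. (?Q * w) $$ (idx3 b e x k i, idx3 b e y k'' j) * mat_adjoint V $$ (k'',k))"
    unfolding mat_adjoint_mid_op
    using index_mult_mid_op[OF mat_adjoint_carrier[OF Vc] _ y k j, of "?Q * w"]
      mid_op_carrier[OF Vc, of a e] w idx3_less[OF x k i] by simp
  also have "\<dots> = (\<Sum>k''<b. (\<Sum>k'<b. V $$ (k,k') * w $$ (idx3 b e x k' i, idx3 b e y k'' j)) * cnj (V $$ (k,k'')))"
    using k Vc by (intro sum.cong refl) (simp add: QW)
  finally show ?thesis by (simp add: sum_distrib_left sum_distrib_right mult_ac)
qed

lemma ptrace_mid_mid_op_conj:
  assumes V: "unitary b V" and w: "dim_row w = a*b*e" "dim_col w = a*b*e"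
  shows "ptrace_mid a b e (mid_op a e V * w * mat_adjoint (mid_op a e V)) = ptrace_mid a b e w"
proof (rule eq_matI)
  have Vc: "V \<in> carrier_mat b b" using V by (rule unitaryD)
  fix I J assume "I < dim_row (ptrace_mid a b e w)" "J < dim_col (ptrace_mid a b e w)"
  then have "I < a*e" "J < a*e" by (auto simp: ptrace_mid_def)
  then obtain x i y j where xi: "I = x*e+i" "x < a" "i < e" and yj: "J = y*e+j" "y < a" "j < e"
    using block_index_cases by metis
  let ?w = "\<lambda>k' k''. w $$ (idx3 b e x k' i, idx3 b e y k'' j)"
  have "ptrace_mid a b e (mid_op a e V * w * mat_adjoint (mid_op a e V)) $$ (I,J)
      = (\<Sum>k<b. \<Sum>k''<b. \<Sum>k'<b. cnj (V $$ (k,k'')) * V $$ (k,k') * ?w k' k'')"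
    unfolding xi(1) yj(1) index_ptrace_mid[OF xi(2) yj(2) xi(3) yj(3)]
    using index_mid_op_conj[OF Vc w xi(2) yj(2) _ xi(3) yj(3)] by simp
  also have "\<dots> = (\<Sum>k'<b. \<Sum>k''<b. \<Sum>k<b. cnj (V $$ (k,k'')) * V $$ (k,k') * ?w k' k'')"
    by (rule sum_swap3)
  also have "\<dots> = (\<Sum>k'<b. \<Sum>k''<b. (mat_adjoint V * V) $$ (k'',k') * ?w k' k'')"
    using Vc by (intro sum.cong refl) (simp add: sum_distrib_right)
  also have "\<dots> = (\<Sum>k'<b. ?w k' k')"
  proof -
    have "(\<Sum>k''<b. 1\<^sub>m b $$ (k'',k') * ?w k' k'') = ?w k' k'" if "k' < b" for k'
      using that by (subst sum_eq_single[of _ k']) auto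
    then show ?thesis unfolding unitaryD(2)[OF V] by (intro sum.cong refl) simp
  qed
  also have "\<dots> = ptrace_mid a b e w $$ (I,J)"
    unfolding xi(1) yj(1) index_ptrace_mid[OF xi(2) yj(2) xi(3) yj(3)] ..
  finally show "ptrace_mid a b e (mid_op a e V * w * mat_adjoint (mid_op a e V)) $$ (I,J) = ptrace_mid a b e w $$ (I,J)" .
qed (auto simp: ptrace_mid_def)

lemma ptrace_left_ptrace_mid: "ptrace_left (a*b) e M = ptrace_left a e (ptrace_mid a b e M)"
proof (rule eq_matI)
  fix i j assume "i < dim_row (ptrace_left a e (ptrace_mid a b e M))" "j < dim_col (ptrace_left a e (ptrace_mid a b e M))"
  then have i: "i < e" and j: "j < e" by (auto simp: ptrace_left_def)
  have "ptrace_left (a*b) e M $$ (i,j) = (\<Sum>x<a. \<Sum>k<b. M $$ (idx3 b e x k i, idx3 b e x k j))"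
    using i j by (simp add: ptrace_left_def sum_lessThan_mult idx3_def)
  also have "\<dots> = ptrace_left a e (ptrace_mid a b e M) $$ (i,j)"
    using i j by (simp add: ptrace_left_def index_ptrace_mid)
  finally show "ptrace_left (a*b) e M $$ (i,j) = ptrace_left a e (ptrace_mid a b e M) $$ (i,j)" .
qed (auto simp: ptrace_left_def)

lemma index_embed_mid:
  assumes "x < a" "y < a" "k < b" "k' < b" "i < e" "j < e"
  shows "embed_mid a b e X $$ (idx3 b e x k i, idx3 b e y k' j) = (if k = k' then X $$ (x*e+i, y*e+j) else 0)"
  using assms idx3_less[of x a k b i e] idx3_less[of y a k' b j e]
  by (simp add: embed_mid_def idx3_div_mod)

lemma embed_mid_carrier: "embed_mid a b e X \<in> carrier_mat (a*b*e) (a*b*e)"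
  by (simp add: embed_mid_def)

lemma mid_op_embed_mid_commute:
  assumes Vc: "V \<in> carrier_mat b b"
  shows "mid_op a e V * embed_mid a b e X = embed_mid a b e X * mid_op a e V"
proof (rule eq_matI)
  let ?S = "embed_mid a b e X"
  fix I J assume "I < dim_row (?S * mid_op a e V)" "J < dim_col (?S * mid_op a e V)"
  then have I: "I < a*b*e" and J: "J < a*b*e" using mid_op_carrier[OF Vc, of a e] by (auto simp: embed_mid_def)
  obtain x k i where xki: "I = idx3 b e x k i" "x < a" "k < b" "i < e" using idx3_cases[OF I] .
  obtain y k' j where ykj: "J = idx3 b e y k' j" "y < a" "k' < b" "j < e" using idx3_cases[OF J] .
  have "(mid_op a e V * ?S) $$ (I,J) = (\<Sum>k''<b. V $$ (k,k'') * ?S $$ (idx3 b e x k'' i, J))"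
    unfolding xki(1) using index_mid_op_mult[OF Vc _ xki(2-4), of ?S J] embed_mid_carrier[of a b e X] J by simp
  also have "\<dots> = V $$ (k,k') * X $$ (x*e+i, y*e+j)"
    unfolding ykj(1) using xki ykj by (subst sum_eq_single[of _ k']) (auto simp: index_embed_mid)
  also have "\<dots> = (\<Sum>k''<b. ?S $$ (I, idx3 b e y k'' j) * V $$ (k'',k'))"
    unfolding xki(1) using xki ykj by (subst sum_eq_single[of _ k]) (auto simp: index_embed_mid)
  also have "\<dots> = (?S * mid_op a e V) $$ (I,J)"
    unfolding ykj(1) using index_mult_mid_op[OF Vc _ ykj(2-4), of ?S I] embed_mid_carrier[of a b e X] I by simp
  finally show "(mid_op a e V * ?S) $$ (I,J) = (?S * mid_op a e V) $$ (I,J)" .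
qed (use mid_op_carrier[OF Vc, of a e] in \<open>auto simp: embed_mid_def\<close>)

lemma index_kron_one_mult:
  assumes R: "R \<in> carrier_mat m m" and M: "dim_row M = a*m" and x: "x < a" and p: "p < m" and J: "J < dim_col M"
  shows "(kron (1\<^sub>m a) R * M) $$ (x*m+p, J) = (\<Sum>q<m. R $$ (p,q) * M $$ (x*m+q, J))"
proof -
  have "(kron (1\<^sub>m a) R * M) $$ (x*m+p, J) = (\<Sum>y<a. \<Sum>q<m. kron (1\<^sub>m a) R $$ (x*m+p, y*m+q) * M $$ (y*m+q,J))"
    using R M J block_index_less[OF x p] by (simp add: sum_lessThan_mult)
  also have "\<dots> = (\<Sum>q<m. R $$ (p,q) * M $$ (x*m+q, J))"
    using x p R index_kron_block[of _ "1\<^sub>m a" p R _ _]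
    by (subst sum_eq_single[of _ x]) (auto intro!: sum.neutral sum.cong)
  finally show ?thesis .
qed

lemma index_mult_kron_one:
  assumes R: "R \<in> carrier_mat m m" and M: "dim_col M = a*m" and y: "y < a" and p: "p < m" and I: "I < dim_row M"
  shows "(M * kron (1\<^sub>m a) R) $$ (I, y*m+p) = (\<Sum>q<m. M $$ (I, y*m+q) * R $$ (q,p))"
proof -
  have "(M * kron (1\<^sub>m a) R) $$ (I, y*m+p) = (\<Sum>x<a. \<Sum>q<m. M $$ (I,x*m+q) * kron (1\<^sub>m a) R $$ (x*m+q, y*m+p))"
    using R M I block_index_less[OF y p] by (simp add: sum_lessThan_mult)
  also have "\<dots> = (\<Sum>q<m. M $$ (I, y*m+q) * R $$ (q,p))"
    using y p R index_kron_block[of _ "1\<^sub>m a" _ R _ p]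
    by (subst sum_eq_single[of _ y]) (auto intro!: sum.neutral sum.cong)
  finally show ?thesis .
qed

lemma ptrace_left_kron_one_conj:
  assumes R: "R \<in> carrier_mat m m" and M: "M \<in> carrier_mat (a*m) (a*m)"
  shows "ptrace_left a m (kron (1\<^sub>m a) R * M * mat_adjoint (kron (1\<^sub>m a) R)) = R * ptrace_left a m M * mat_adjoint R"
proof (rule eq_matI)
  let ?K = "kron (1\<^sub>m a) R"
  have Kc: "?K \<in> carrier_mat (a*m) (a*m)" using R by auto
  have N: "ptrace_left a m M \<in> carrier_mat m m" by (simp add: ptrace_left_def)
  fix i j assume "i < dim_row (R * ptrace_left a m M * mat_adjoint R)" "j < dim_col (R * ptrace_left a m M * mat_adjoint R)"
  then have i: "i < m" and j: "j < m" using R by auto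
  have E: "(?K * M * mat_adjoint ?K) $$ (x*m+i, x*m+j) = (\<Sum>r<m. \<Sum>q<m. R $$ (i,q) * M $$ (x*m+q, x*m+r) * cnj (R $$ (j,r)))"
    if x: "x < a" for x
  proof -
    have "(?K * M * mat_adjoint ?K) $$ (x*m+i, x*m+j) = (\<Sum>r<m. (?K * M) $$ (x*m+i, x*m+r) * mat_adjoint R $$ (r,j))"
      unfolding mat_adjoint_kron mat_adjoint_one
      using index_mult_kron_one[OF mat_adjoint_carrier[OF R], of "?K * M" a x j "x*m+i"] x Kc M block_index_less[OF x i] j R
      by simp
    also have "\<dots> = (\<Sum>r<m. (\<Sum>q<m. R $$ (i,q) * M $$ (x*m+q, x*m+r)) * cnj (R $$ (j,r)))"
      using index_kron_one_mult[OF R _ x i] M R j block_index_less[OF x] by (intro sum.cong refl) auto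
    finally show ?thesis by (simp add: sum_distrib_right)
  qed
  have "ptrace_left a m (?K * M * mat_adjoint ?K) $$ (i,j) = (\<Sum>x<a. \<Sum>r<m. \<Sum>q<m. R $$ (i,q) * M $$ (x*m+q, x*m+r) * cnj (R $$ (j,r)))"
    using i j E by (simp add: ptrace_left_def)
  also have "\<dots> = (\<Sum>q<m. \<Sum>r<m. \<Sum>x<a. R $$ (i,q) * M $$ (x*m+q, x*m+r) * cnj (R $$ (j,r)))"
    by (rule sum_swap3)
  also have "\<dots> = (\<Sum>r<m. \<Sum>q<m. R $$ (i,q) * ptrace_left a m M $$ (q,r) * cnj (R $$ (j,r)))"
    by (subst sum.swap) (auto simp: ptrace_left_def sum_distrib_left sum_distrib_right intro!: sum.cong)
  also have "\<dots> = (R * ptrace_left a m M * mat_adjoint R) $$ (i,j)"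
    using R N i j by (auto simp: sum_distrib_right intro!: sum.cong)
  finally show "ptrace_left a m (?K * M * mat_adjoint ?K) $$ (i,j) = (R * ptrace_left a m M * mat_adjoint R) $$ (i,j)" .
qed (use R in \<open>auto simp: ptrace_left_def\<close>)

lemma ptrace_left_self_adjoint:
  assumes M: "M \<in> carrier_mat (n*m) (n*m)" and H: "mat_adjoint M = M"
  shows "mat_adjoint (ptrace_left n m M) = ptrace_left n m M"
proof (rule eq_matI)
  fix i j assume "i < dim_row (ptrace_left n m M)" "j < dim_col (ptrace_left n m M)"
  then have i: "i < m" and j: "j < m" by (auto simp: ptrace_left_def)
  have "cnj (M $$ (x*m+j, x*m+i)) = M $$ (x*m+i, x*m+j)" if "x < n" for x
  proof -
    have "mat_adjoint M $$ (x*m+i, x*m+j) = cnj (M $$ (x*m+j, x*m+i))"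
      using M block_index_less[OF that i] block_index_less[OF that j] by simp
    then show ?thesis unfolding H by simp
  qed
  then show "mat_adjoint (ptrace_left n m M) $$ (i,j) = ptrace_left n m M $$ (i,j)"
    using i j by (simp add: ptrace_left_def cnj_sum)
qed (auto simp: ptrace_left_def)

lemma kron_one_commute_kron_one:
  assumes "V \<in> carrier_mat b b" "Y \<in> carrier_mat e e"
  shows "kron (1\<^sub>m b) Y * kron V (1\<^sub>m e) = kron V (1\<^sub>m e) * kron (1\<^sub>m b) Y"
  using assms by (simp add: kron_mult_kron[of _ b b _ e e _ b _ e])

lemma mtrace_mfun_conj_commuting_unitary:
  assumes R: "unitary n R" and T: "T \<in> carrier_mat n n" and N: "N \<in> carrier_mat n n"
    and TR: "T * R = R * T" and TR': "T * mat_adjoint R = mat_adjoint R * T"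
  shows "mtrace (mfun f (T * (R * N * mat_adjoint R) * T)) = mtrace (mfun f (T * N * T))"
proof -
  have Rc: "R \<in> carrier_mat n n" using R by (rule unitaryD)
  have TNT: "T * N * T \<in> carrier_mat n n" using T N by auto
  have "T * (R * N * mat_adjoint R) * T = (T * R) * N * (mat_adjoint R * T)"
    using Rc T N by (simp add: assoc_mult_mat_dims)
  also have "\<dots> = R * (T * N * T) * mat_adjoint R"
    unfolding TR TR'[symmetric] using Rc T N by (simp add: assoc_mult_mat_dims)
  finally have conj: "T * (R * N * mat_adjoint R) * T = R * (T * N * T) * mat_adjoint R" .
  show ?thesis
    unfolding conj mfun_unitary_conj[OF R TNT]
    using mtrace_unitary_conj[OF R] mfun_carrier[of "T * N * T" f] TNT carrier_matD[OF T] by simp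
qed

section \<open>Invariance of the Renyi conditional mutual information\<close>

lemma ptrace_left_sandwich_mid_op_conj:
  fixes X :: "complex mat"
  assumes V: "unitary b V" and w: "w \<in> carrier_mat (a*b*e) (a*b*e)"
  defines "S \<equiv> embed_mid a b e X" and "R \<equiv> kron V (1\<^sub>m e)"
  shows "ptrace_left a (b*e) (S * mfun f (mid_op a e V * w * mat_adjoint (mid_op a e V)) * S) =
    (if unitarily_diagonalizable w then R * ptrace_left a (b*e) (S * mfun f w * S) * mat_adjoint R
     else ptrace_left a (b*e) (S * mfun f w * S))"
proof (cases "unitarily_diagonalizable w")
  case True
  let ?Q = "mid_op a e V"
  have Vc: "V \<in> carrier_mat b b" using V by (rule unitaryD)
  have Qu: "unitary (a*b*e) ?Q" by (rule unitary_mid_op[OF V])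
  have Qc: "?Q \<in> carrier_mat (a*b*e) (a*b*e)" using Qu by (rule unitaryD)
  have Sc: "S \<in> carrier_mat (a*b*e) (a*b*e)" unfolding S_def by (rule embed_mid_carrier)
  define P where "P = mfun f w"
  have Pc: "P \<in> carrier_mat (a*b*e) (a*b*e)" unfolding P_def using mfun_carrier[OF True] w by simp
  have SQ: "?Q * S = S * ?Q" and SQ': "mat_adjoint ?Q * S = S * mat_adjoint ?Q"
    unfolding S_def mat_adjoint_mid_op by (rule mid_op_embed_mid_commute[OF Vc], rule mid_op_embed_mid_commute) (use Vc in auto)
  note dims = carrier_matD[OF Qc] carrier_matD[OF mat_adjoint_carrier[OF Qc]] carrier_matD[OF Sc] carrier_matD[OF Pc]
  have "S * (?Q * P * mat_adjoint ?Q) * S = (S * ?Q) * P * (mat_adjoint ?Q * S)"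
    using dims by (simp add: assoc_mult_mat_dims)
  also have "\<dots> = ?Q * (S * P * S) * mat_adjoint ?Q"
    unfolding SQ[symmetric] SQ' using dims by (simp add: assoc_mult_mat_dims)
  finally have "S * mfun f (?Q * w * mat_adjoint ?Q) * S = ?Q * (S * P * S) * mat_adjoint ?Q"
    unfolding mfun_unitary_conj[OF Qu w] P_def using True by simp
  moreover have "?Q = kron (1\<^sub>m a) R" unfolding mid_op_def R_def ..
  moreover have "S * P * S \<in> carrier_mat (a*(b*e)) (a*(b*e))" using Sc Pc by (simp add: mult.assoc[symmetric])
  moreover have "R \<in> carrier_mat (b*e) (b*e)" unfolding R_def using Vc by auto
  ultimately show ?thesis using True ptrace_left_kron_one_conj unfolding P_def by simp
qed (simp add: mfun_unitary_conj[OF unitary_mid_op[OF V] w])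

lemma renyi_cmi_mid_op_conj:
  assumes V: "unitary b V" and w: "w \<in> carrier_mat (a*b*e) (a*b*e)" and H: "mat_adjoint w = w"
  shows "renyi_cmi \<alpha> a b e (mid_op a e V * w * mat_adjoint (mid_op a e V)) = renyi_cmi \<alpha> a b e w"
proof -
  define w' where "w' = mid_op a e V * w * mat_adjoint (mid_op a e V)"
  define R where "R = kron V (1\<^sub>m e)"
  have Vc: "V \<in> carrier_mat b b" using V by (rule unitaryD)
  have Ru: "unitary (b*e) R" unfolding R_def by (rule unitary_kron[OF V unitary_one])
  have marg_AE: "ptrace_mid a b e w' = ptrace_mid a b e w"
    unfolding w'_def using ptrace_mid_mid_op_conj[OF V] w by simp
  then have marg_E: "ptrace_left (a*b) e w' = ptrace_left (a*b) e w"
    by (simp add: ptrace_left_ptrace_mid)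
  define S where "S = embed_mid a b e (mpow (ptrace_mid a b e w) ((1 - \<alpha>) / 2))"
  define \<rho>E where "\<rho>E = ptrace_left (a*b) e w"
  have \<rho>Ec: "\<rho>E \<in> carrier_mat e e" unfolding \<rho>E_def by (simp add: ptrace_left_def)
  have "unitarily_diagonalizable \<rho>E"
    using hermitian_unitarily_diagonalizable[OF \<rho>Ec] ptrace_left_self_adjoint[OF w H] unfolding \<rho>E_def by simp
  define Y where "Y = mpow \<rho>E ((\<alpha> - 1) / 2)"
  have Yc: "Y \<in> carrier_mat e e" unfolding Y_def mpow_def using mfun_carrier[of \<rho>E] \<open>unitarily_diagonalizable \<rho>E\<close> \<rho>Ec by simp
  define T where "T = kron (1\<^sub>m b) Y"
  have Tc: "T \<in> carrier_mat (b*e) (b*e)" unfolding T_def using Yc by auto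
  have TR: "T * R = R * T" and TR': "T * mat_adjoint R = mat_adjoint R * T"
    unfolding T_def R_def mat_adjoint_kron mat_adjoint_one
    using kron_one_commute_kron_one Vc Yc by auto
  define inner where "inner = ptrace_left a (b*e) (S * mpow w \<alpha> * S)"
  have inner_c: "inner \<in> carrier_mat (b*e) (b*e)" unfolding inner_def by (simp add: ptrace_left_def)
  have inner_conj: "ptrace_left a (b*e) (S * mpow w' \<alpha> * S) =
      (if unitarily_diagonalizable w then R * inner * mat_adjoint R else inner)"
    unfolding w'_def S_def inner_def R_def mpow_def by (rule ptrace_left_sandwich_mid_op_conj[OF V w])
  have "mtrace (mpow (T * ptrace_left a (b*e) (S * mpow w' \<alpha> * S) * T) (1/\<alpha>)) = mtrace (mpow (T * inner * T) (1/\<alpha>))"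
    unfolding inner_conj unfolding mpow_def using mtrace_mfun_conj_commuting_unitary[OF Ru Tc inner_c TR TR'] by simp
  then show ?thesis
    unfolding renyi_cmi_def Let_def w'_def[symmetric] marg_AE marg_E
      S_def[symmetric] \<rho>E_def[symmetric] Y_def[symmetric] T_def[symmetric] inner_def[symmetric]
    by simp
qed

section \<open>The discord objective under local unitaries\<close>

lemma swap_mat_carrier: "swap_mat N B \<in> carrier_mat (N*B) (N*B)"
  by (simp add: swap_mat_def)

lemma swap_mat_kron_commute:
  assumes Vc: "V \<in> carrier_mat B B"
  shows "swap_mat N B * kron (1\<^sub>m N) V = kron V (1\<^sub>m N) * swap_mat N B"
proof (rule eq_matI)
  fix r c assume "r < dim_row (kron V (1\<^sub>m N) * swap_mat N B)" "c < dim_col (kron V (1\<^sub>m N) * swap_mat N B)"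
  then have r: "r < N*B" and c: "c < N*B" using Vc by (auto simp: swap_mat_def mult.commute)
  then have N0: "N > 0" and B0: "B > 0" by (auto intro: gr0I)
  have rb: "r div N < B" "r mod N < N" using r N0 by (auto simp: less_mult_imp_div_less mult.commute)
  have cb: "c div B < N" "c mod B < B" using c B0 by (auto simp: less_mult_imp_div_less)
  define l0 where "l0 = (r mod N) * B + r div N"
  have l0: "l0 < N*B" unfolding l0_def using rb by (intro block_index_less)
  have l0e: "(l0 mod B) * N + l0 div B = r" unfolding l0_def using rb by simp
  have uniq: "l = l0" if l: "l < N*B" and rl: "r = (l mod B) * N + l div B" for l
  proof -
    have "l div B < N" using l B0 by (simp add: less_mult_imp_div_less)
    then have "r mod N = l div B" "r div N = l mod B" using rl by (simp_all add: add.commute mult.commute)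
    then show "l = l0" unfolding l0_def by simp
  qed
  define c0 where "c0 = (c mod B) * N + c div B"
  have "c0 < B*N" unfolding c0_def using cb by (intro block_index_less)
  then have c0: "c0 < N*B" by (simp add: mult.commute)
  have "(swap_mat N B * kron (1\<^sub>m N) V) $$ (r,c) = (\<Sum>l<N*B. swap_mat N B $$ (r,l) * kron (1\<^sub>m N) V $$ (l,c))"
    using r c Vc by (auto simp: swap_mat_def)
  also have "\<dots> = kron (1\<^sub>m N) V $$ (l0,c)"
    using l0 r l0e by (subst sum_eq_single[of _ l0]) (auto simp: swap_mat_def dest: uniq)
  also have "\<dots> = (if r mod N = c div B then V $$ (r div N, c mod B) else 0)"
    using l0 c Vc rb cb B0 by (simp add: index_kron l0_def)
  also have "\<dots> = kron V (1\<^sub>m N) $$ (r, c0) * swap_mat N B $$ (c0, c)"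
    using r c0 c Vc rb cb N0 by (simp add: index_kron c0_def swap_mat_def mult.commute)
  also have "\<dots> = (\<Sum>l<N*B. kron V (1\<^sub>m N) $$ (r,l) * swap_mat N B $$ (l,c))"
    using c0 c by (intro sum_eq_single[symmetric]) (auto simp: swap_mat_def c0_def)
  also have "\<dots> = (kron V (1\<^sub>m N) * swap_mat N B) $$ (r,c)"
    using r c Vc by (auto simp: swap_mat_def mult.commute[of B N])
  finally show "(swap_mat N B * kron (1\<^sub>m N) V) $$ (r,c) = (kron V (1\<^sub>m N) * swap_mat N B) $$ (r,c)" .
qed (use Vc in \<open>auto simp: swap_mat_def mult.commute\<close>)

lemma reorder_kron_one:
  assumes Vc: "V \<in> carrier_mat dB dB"
  shows "kron (1\<^sub>m dE) (swap_mat n dB) * kron (1\<^sub>m (dE*n)) V = mid_op dE n V * kron (1\<^sub>m dE) (swap_mat n dB)"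
proof -
  have "kron (1\<^sub>m (dE*n)) V = kron (1\<^sub>m dE) (kron (1\<^sub>m n) V)"
    by (simp add: kron_one_one[symmetric] kron_assoc)
  then have "kron (1\<^sub>m dE) (swap_mat n dB) * kron (1\<^sub>m (dE*n)) V
      = kron (1\<^sub>m dE * 1\<^sub>m dE) (swap_mat n dB * kron (1\<^sub>m n) V)"
    using Vc swap_mat_carrier[of n dB] by (simp add: kron_mult_kron[of _ dE dE _ "n*dB" "n*dB" _ dE _ "n*dB"])
  also have "\<dots> = kron (1\<^sub>m dE * 1\<^sub>m dE) (kron V (1\<^sub>m n) * swap_mat n dB)"
    by (simp add: swap_mat_kron_commute[OF Vc])
  also have "\<dots> = mid_op dE n V * kron (1\<^sub>m dE) (swap_mat n dB)"
    using kron_carrier_mat[OF Vc one_carrier_mat[of n]] unfolding mid_op_def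
    by (intro kron_mult_kron[symmetric, OF one_carrier_mat _ one_carrier_mat swap_mat_carrier]) (simp add: mult.commute)
  finally show ?thesis .
qed

lemma kron_mult_kron_unitary:
  assumes W: "W \<in> carrier_mat (dE*n) dA" and Uc: "U \<in> carrier_mat dA dA" and Vc: "V \<in> carrier_mat dB dB"
  shows "kron W (1\<^sub>m dB) * kron U V = kron (1\<^sub>m (dE*n)) V * kron (W * U) (1\<^sub>m dB)"
proof -
  have WU: "W * U \<in> carrier_mat (dE*n) dA" using W Uc by auto
  have "kron W (1\<^sub>m dB) * kron U V = kron (1\<^sub>m (dE*n) * (W * U)) (V * 1\<^sub>m dB)"
    using kron_mult_kron[OF W one_carrier_mat Uc Vc] WU Vc by (simp add: left_mult_one_mat[OF WU])
  also have "\<dots> = kron (1\<^sub>m (dE*n)) V * kron (W * U) (1\<^sub>m dB)"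
    by (rule kron_mult_kron[symmetric, OF one_carrier_mat Vc WU one_carrier_mat])
  finally show ?thesis .
qed

lemma discord_obj_local_unitary:
  assumes U: "unitary dA U" and V: "unitary dB V" and \<rho>: "\<rho> \<in> carrier_mat (dA*dB) (dA*dB)"
    and H: "mat_adjoint \<rho> = \<rho>" and W: "W \<in> carrier_mat (dE*n) dA"
  shows "discord_obj \<alpha> dA dB (kron U V * \<rho> * mat_adjoint (kron U V)) n dE W = discord_obj \<alpha> dA dB \<rho> n dE (W * U)"
proof -
  have Uc: "U \<in> carrier_mat dA dA" and Vc: "V \<in> carrier_mat dB dB" using U V by (auto simp: unitary_def)
  define K P Y where "K = kron (W * U) (1\<^sub>m dB)" and "P = kron (1\<^sub>m dE) (swap_mat n dB)"
    and "Y = kron (1\<^sub>m (dE*n)) V"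
  have Kc: "K \<in> carrier_mat (dE*n*dB) (dA*dB)" unfolding K_def using W Uc by auto
  have Yc: "Y \<in> carrier_mat (dE*n*dB) (dE*n*dB)" unfolding Y_def using Vc by auto
  have Pc: "P \<in> carrier_mat (dE*n*dB) (dE*n*dB)"
    unfolding P_def using swap_mat_carrier[of n dB] by (auto simp: mult.assoc)
  have Qc: "mid_op dE n V \<in> carrier_mat (dE*n*dB) (dE*n*dB)"
    using mid_op_carrier[OF Vc, of dE n] by (simp add: mult_ac)
  define X where "X = K * \<rho> * mat_adjoint K"
  have Xc: "X \<in> carrier_mat (dE*n*dB) (dE*n*dB)" unfolding X_def using Kc \<rho> by auto
  have "P * (kron W (1\<^sub>m dB) * (kron U V * \<rho> * mat_adjoint (kron U V)) * mat_adjoint (kron W (1\<^sub>m dB))) * mat_adjoint P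
      = P * (Y * X * mat_adjoint Y) * mat_adjoint P"
    unfolding X_def conj_mult_conj[OF kron_carrier_mat[OF W one_carrier_mat] kron_carrier_mat[OF Uc Vc] \<rho>]
      kron_mult_kron_unitary[OF W Uc Vc, folded Y_def K_def] conj_mult_conj[OF Yc Kc \<rho>] ..
  also have "\<dots> = mid_op dE n V * (P * X * mat_adjoint P) * mat_adjoint (mid_op dE n V)"
    unfolding conj_mult_conj[OF Pc Yc Xc] unfolding P_def Y_def reorder_kron_one[OF Vc]
    by (rule conj_mult_conj[OF Qc Pc[unfolded P_def] Xc, symmetric])
  finally have \<omega>: "P * (kron W (1\<^sub>m dB) * (kron U V * \<rho> * mat_adjoint (kron U V)) * mat_adjoint (kron W (1\<^sub>m dB))) * mat_adjoint P
      = mid_op dE n V * (P * X * mat_adjoint P) * mat_adjoint (mid_op dE n V)" .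
  have "P * X * mat_adjoint P \<in> carrier_mat (dE*dB*n) (dE*dB*n)" using Pc Xc by (auto simp: mult_ac)
  moreover have "mat_adjoint (P * X * mat_adjoint P) = P * X * mat_adjoint P"
    using self_adjoint_conj[OF Xc self_adjoint_conj[OF \<rho> H Kc, folded X_def] Pc] .
  ultimately show ?thesis
    unfolding discord_obj_def Let_def P_def[symmetric] \<omega> using renyi_cmi_mid_op_conj[OF V]
    by (simp add: X_def K_def)
qed

section \<open>Rotating the measurement\<close>

lemma inner_mat_adjoint_mult_vec:
  fixes U :: "complex mat"
  assumes U: "U \<in> carrier_mat n n" and v: "v \<in> carrier_vec n" and z: "z \<in> carrier_vec n"
  shows "conjugate v \<bullet> (mat_adjoint U *\<^sub>v z) = conjugate (U *\<^sub>v v) \<bullet> z"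
proof -
  have "conjugate v \<bullet> (mat_adjoint U *\<^sub>v z) = (\<Sum>i<n. \<Sum>k<n. cnj (v $ i) * cnj (U $$ (k,i)) * z $ k)"
    using U v z by (auto simp: scalar_prod_def atLeast0LessThan sum_distrib_left mult.assoc intro!: sum.cong)
  also have "\<dots> = (\<Sum>k<n. cnj (\<Sum>i<n. U $$ (k,i) * v $ i) * z $ k)"
    by (subst sum.swap) (simp add: cnj_sum sum_distrib_right sum_distrib_left mult_ac)
  also have "\<dots> = conjugate (U *\<^sub>v v) \<bullet> z"
    using U v z by (auto simp: scalar_prod_def atLeast0LessThan intro!: sum.cong)
  finally show ?thesis .
qed

lemma psd_adjoint_conj:
  assumes M: "M \<in> carrier_mat n n" and P: "psd M" and U: "U \<in> carrier_mat n n"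
  shows "psd (mat_adjoint U * M * U)"
  unfolding psd_def
proof (intro conjI ballI)
  have H: "mat_adjoint M = M" using P by (simp add: psd_def hermitian_def)
  show "hermitian (mat_adjoint U * M * U)"
    using self_adjoint_conj[OF M H mat_adjoint_carrier[OF U]] U M by (auto simp: hermitian_def square_mat.simps)
  fix v :: "complex vec" assume "v \<in> carrier_vec (dim_row (mat_adjoint U * M * U))"
  then have v: "v \<in> carrier_vec n" using U by simp
  have Uv: "U *\<^sub>v v \<in> carrier_vec n" and MUv: "M *\<^sub>v (U *\<^sub>v v) \<in> carrier_vec n" using U M v by auto
  have "(mat_adjoint U * M * U) *\<^sub>v v = mat_adjoint U *\<^sub>v (M *\<^sub>v (U *\<^sub>v v))"
    using assoc_mult_mat_vec[OF mult_carrier_mat[OF mat_adjoint_carrier[OF U] M] U v]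
      assoc_mult_mat_vec[OF mat_adjoint_carrier[OF U] M Uv] by simp
  then have "conjugate v \<bullet> ((mat_adjoint U * M * U) *\<^sub>v v) = conjugate (U *\<^sub>v v) \<bullet> (M *\<^sub>v (U *\<^sub>v v))"
    using inner_mat_adjoint_mult_vec[OF U v MUv] by simp
  then show "0 \<le> Re (conjugate v \<bullet> ((mat_adjoint U * M * U) *\<^sub>v v))"
    using P Uv M unfolding psd_def by auto
qed

lemma povm_unitary_conj:
  assumes U: "unitary d U" and P: "povm d n \<Lambda>"
  shows "povm d n (\<lambda>x. mat_adjoint U * \<Lambda> x * U)"
  unfolding povm_def
proof (intro conjI allI impI)
  have Uc: "U \<in> carrier_mat d d" using U by (rule unitaryD)
  have Lc: "\<And>x. x < n \<Longrightarrow> \<Lambda> x \<in> carrier_mat d d" and Lp: "\<And>x. x < n \<Longrightarrow> psd (\<Lambda> x)"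
    and S: "mat d d (\<lambda>(i, j). \<Sum>x<n. \<Lambda> x $$ (i, j)) = 1\<^sub>m d" using P by (auto simp: povm_def)
  fix x assume x: "x < n"
  show "mat_adjoint U * \<Lambda> x * U \<in> carrier_mat d d" using Lc[OF x] Uc by auto
  show "psd (mat_adjoint U * \<Lambda> x * U)" by (rule psd_adjoint_conj[OF Lc[OF x] Lp[OF x] Uc])
next
  have Uc: "U \<in> carrier_mat d d" using U by (rule unitaryD)
  have Lc: "\<And>x. x < n \<Longrightarrow> \<Lambda> x \<in> carrier_mat d d"
    and S: "mat d d (\<lambda>(i, j). \<Sum>x<n. \<Lambda> x $$ (i, j)) = 1\<^sub>m d" using P by (auto simp: povm_def)
  have sum_\<Lambda>: "(\<Sum>x<n. \<Lambda> x $$ (k,l)) = 1\<^sub>m d $$ (k,l)" if "k < d" "l < d" for k l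
    using arg_cong[OF S, of "\<lambda>M. M $$ (k,l)"] that by simp
  show "mat d d (\<lambda>(i, j). \<Sum>x<n. (mat_adjoint U * \<Lambda> x * U) $$ (i, j)) = 1\<^sub>m d"
  proof (rule eq_matI)
    fix i j assume "i < dim_row (1\<^sub>m d)" "j < dim_col (1\<^sub>m d)"
    then have i: "i < d" and j: "j < d" by auto
    have "(\<Sum>x<n. (mat_adjoint U * \<Lambda> x * U) $$ (i, j))
        = (\<Sum>x<n. \<Sum>k<d. \<Sum>l<d. mat_adjoint U $$ (i,k) * \<Lambda> x $$ (k,l) * U $$ (l,j))"
      using index_triple_mult[OF mat_adjoint_carrier[OF Uc] Lc Uc i j] by simp
    also have "\<dots> = (\<Sum>k<d. \<Sum>l<d. mat_adjoint U $$ (i,k) * (\<Sum>x<n. \<Lambda> x $$ (k,l)) * U $$ (l,j))"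
      by (simp add: sum.swap[of _ "{..<n}"] sum_distrib_left sum_distrib_right)
    also have "\<dots> = (mat_adjoint U * 1\<^sub>m d * U) $$ (i,j)"
      using index_triple_mult[OF mat_adjoint_carrier[OF Uc] one_carrier_mat Uc i j] sum_\<Lambda> by simp
    also have "\<dots> = 1\<^sub>m d $$ (i,j)"
      using Uc by (simp add: right_mult_one_mat[OF mat_adjoint_carrier[OF Uc]] unitaryD[OF U])
    finally show "mat d d (\<lambda>(i, j). \<Sum>x<n. (mat_adjoint U * \<Lambda> x * U) $$ (i, j)) $$ (i,j) = 1\<^sub>m d $$ (i,j)"
      using i j by simp
  qed auto
qed

lemma meas_channel_unitary_conj:
  assumes Uc: "U \<in> carrier_mat d d" and Lc: "\<And>x. x < n \<Longrightarrow> \<Lambda> x \<in> carrier_mat d d"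
    and \<sigma>: "\<sigma> \<in> carrier_mat d d"
  shows "meas_channel n \<Lambda> (U * \<sigma> * mat_adjoint U) = meas_channel n (\<lambda>x. mat_adjoint U * \<Lambda> x * U) \<sigma>"
proof (rule eq_matI)
  fix i j assume "i < dim_row (meas_channel n (\<lambda>x. mat_adjoint U * \<Lambda> x * U) \<sigma>)"
    "j < dim_col (meas_channel n (\<lambda>x. mat_adjoint U * \<Lambda> x * U) \<sigma>)"
  then have i: "i < n" and j: "j < n" by (auto simp: meas_channel_def)
  note dims = carrier_matD[OF Uc] carrier_matD[OF \<sigma>] carrier_matD[OF Lc[OF i]]
  have "mtrace (\<Lambda> i * (U * \<sigma> * mat_adjoint U)) = mtrace ((\<Lambda> i * U * \<sigma>) * mat_adjoint U)"
    using dims by (simp add: assoc_mult_mat_dims)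
  also have "\<dots> = mtrace (mat_adjoint U * (\<Lambda> i * U * \<sigma>))"
    using Lc[OF i] Uc \<sigma> by (intro mtrace_mult_commute) auto
  also have "\<dots> = mtrace (mat_adjoint U * \<Lambda> i * U * \<sigma>)" using dims by (simp add: assoc_mult_mat_dims)
  finally show "meas_channel n \<Lambda> (U * \<sigma> * mat_adjoint U) $$ (i,j) = meas_channel n (\<lambda>x. mat_adjoint U * \<Lambda> x * U) \<sigma> $$ (i,j)"
    using i j by (auto simp: meas_channel_def)
qed (auto simp: meas_channel_def)

lemma iso_ext_mult_unitary:
  assumes U: "unitary d U" and P: "povm d n \<Lambda>" and I: "iso_ext d n \<Lambda> dE W"
  shows "iso_ext d n (\<lambda>x. mat_adjoint U * \<Lambda> x * U) dE (W * U)"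
  unfolding iso_ext_def
proof (intro conjI ballI)
  have Uc: "U \<in> carrier_mat d d" using U by (rule unitaryD)
  have Wc: "W \<in> carrier_mat (dE*n) d" and Wu: "mat_adjoint W * W = 1\<^sub>m d"
    and Wm: "\<And>\<sigma>. \<sigma> \<in> carrier_mat d d \<Longrightarrow> ptrace_left dE n (W * \<sigma> * mat_adjoint W) = meas_channel n \<Lambda> \<sigma>"
    using I by (auto simp: iso_ext_def)
  show "W * U \<in> carrier_mat (dE*n) d" using Wc Uc by simp
  have "mat_adjoint (W * U) * (W * U) = mat_adjoint U * (mat_adjoint W * W) * U"
    using Wc Uc by (simp add: mat_adjoint_mult assoc_mult_mat_dims)
  then show "mat_adjoint (W * U) * (W * U) = 1\<^sub>m d"
    unfolding Wu using Uc by (simp add: unitaryD[OF U])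
  fix \<sigma> :: "complex mat" assume \<sigma>: "\<sigma> \<in> carrier_mat d d"
  have "(W * U) * \<sigma> * mat_adjoint (W * U) = W * (U * \<sigma> * mat_adjoint U) * mat_adjoint W"
    by (rule conj_mult_conj[OF Wc Uc \<sigma>, symmetric])
  moreover have "U * \<sigma> * mat_adjoint U \<in> carrier_mat d d" using Uc \<sigma> by auto
  ultimately show "ptrace_left dE n ((W * U) * \<sigma> * mat_adjoint (W * U)) = meas_channel n (\<lambda>x. mat_adjoint U * \<Lambda> x * U) \<sigma>"
    using Wm meas_channel_unitary_conj[OF Uc _ \<sigma>] P by (auto simp: povm_def)
qed

theorem proposition9:
  fixes \<alpha> :: real and dA dB :: nat and \<rho> U V :: "complex mat"
  assumes "0 < \<alpha>" and "\<alpha> \<noteq> 1"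
    and "0 < dA" and "0 < dB"
    and "density (dA * dB) \<rho>"
    and "unitary dA U" and "unitary dB V"
  shows "renyi_discord \<alpha> dA dB (kron U V * \<rho> * mat_adjoint (kron U V))
         = renyi_discord \<alpha> dA dB \<rho>"
proof -
  have U: "unitary dA U" and V: "unitary dB V" by fact+
  have \<rho>: "\<rho> \<in> carrier_mat (dA*dB) (dA*dB)" and H: "mat_adjoint \<rho> = \<rho>"
    using assms(5) by (auto simp: density_def psd_def hermitian_def)
  define feasible where "feasible = {(n, \<Lambda>, dE, W). povm dA n \<Lambda> \<and> iso_ext dA n \<Lambda> dE W}"
  define rotate :: "complex mat \<Rightarrow> nat \<times> (nat \<Rightarrow> complex mat) \<times> nat \<times> complex mat \<Rightarrow> _"
    where "rotate R = (\<lambda>(n, \<Lambda>, dE, W). (n, \<lambda>x. mat_adjoint R * \<Lambda> x * R, dE, W * R))" for R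
  have rotate_feasible: "rotate R q \<in> feasible" if "unitary dA R" "q \<in> feasible" for R q
    using that povm_unitary_conj iso_ext_mult_unitary by (auto simp: feasible_def rotate_def)
  have Wc: "W \<in> carrier_mat (dE*n) dA" if "(n, \<Lambda>, dE, W) \<in> feasible" for n \<Lambda> dE W
    using that by (auto simp: feasible_def iso_ext_def)
  have W_cancel: "W * mat_adjoint U * U = W" if "(n, \<Lambda>, dE, W) \<in> feasible" for n \<Lambda> dE W
    using Wc[OF that] unitaryD[OF U] by (simp add: assoc_mult_mat_dims)
  let ?obj = "\<lambda>\<sigma> q. ereal (case q of (n, \<Lambda>, dE, W) \<Rightarrow> discord_obj \<alpha> dA dB \<sigma> n dE W)"
  let ?\<rho>' = "kron U V * \<rho> * mat_adjoint (kron U V)"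
  have "?obj ?\<rho>' q = ?obj \<rho> (rotate U q)" if "q \<in> feasible" for q
    using that discord_obj_local_unitary[OF U V \<rho> H Wc] by (cases q) (auto simp: rotate_def)
  moreover have "?obj \<rho> q = ?obj ?\<rho>' (rotate (mat_adjoint U) q)" if "q \<in> feasible" for q
    using that discord_obj_local_unitary[OF U V \<rho> H mult_carrier_mat[OF Wc mat_adjoint_carrier[OF unitaryD(1)[OF U]]]]
      W_cancel by (cases q) (auto simp: rotate_def)
  ultimately show ?thesis
    unfolding renyi_discord_def feasible_def[symmetric]
    using rotate_feasible U unitary_adjoint[OF U] by (intro INF_eq) (metis order.refl)+
qed

end
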